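(* Let $M$ be a $3$-Kenmotsu manifold with structures $(\varphi_\alpha,\eta,\xi,g)$, $\alpha=1,2,3$, and let $H=\{X\in TM:\eta(X)=0\}$. Then for every nonzero $X\in H$, $$\mathbf{H}_1(X)+\mathbf{H}_2(X)+\mathbf{H}_3(X)=-3,$$ where $\mathbf{H}_\alpha(X)=-\dfrac{R(X,\varphi_\alpha X,X,\varphi_\alpha X)}{g(X,X)^2}$ is the $\varphi_\alpha$-holomorphic sectional curvature.
   Context: An almost contact metric structure $(\varphi,\eta,\xi,g)$ on an odd-dimensional manifold $M$ consists of a $(1,1)$-tensor $\varphi$, a vector field $\xi$, a $1$-form $\eta$ and a Riemannian metric $g$ with $\varphi^2X=-X+\eta(X)\xi$, $\eta(\xi)=1$, $\eta\circ\varphi=0$, $\varphi\xi=0$, $g(\varphi X,\varphi Y)=g(X,Y)-\eta(X)\eta(Y)$, $\eta(X)=g(\xi,X)$. It is Kenmotsu if $(\nabla_X\varphi)Y=g(\varphi X,Y)\xi-\eta(Y)\varphi X$ for all vector fields $X,Y$, with $\nabla$ the Levi-Civita connection of $g$. A $3$-Kenmotsu manifold is a smooth manifold $M$ equipped with three Kenmotsu structures $(\varphi_\alpha,\eta,\xi,g)$, $\alpha=1,2,3$ (same $\eta,\xi,g$), such that $\varphi_k=\varphi_i\circ\varphi_j$ for every even permutation $(i,j,k)$ of $(1,2,3)$. Curvature conventions: $R(X,Y)Z=\nabla_X\nabla_YZ-\nabla_Y\nabla_XZ-\nabla_{[X,Y]}Z$ and $R(X,Y,Z,W)=g(R(X,Y)Z,W)$;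 with these conventions $\mathbf{H}_\alpha(X)$ equals the sectional curvature of the plane spanned by $X$ and $\varphi_\alpha X$ (note $g(\varphi_\alpha X,\varphi_\alpha X)=g(X,X)$ and $g(X,\varphi_\alpha X)=0$ for $X\in H$). *)

theory Defs
  imports "HOL-Analysis.Analysis"
begin

text \<open>Local (coordinate) model: the manifold is an open set U of real^'n, tangent
vectors at a point are elements of real^'n, tensor fields are functions on U.\<close>

definition pd :: "'n::finite \<Rightarrow> (real^'n \<Rightarrow> real) \<Rightarrow> real^'n \<Rightarrow> real" where
  "pd i f x = deriv (\<lambda>t. f (x + t *\<^sub>R axis i 1)) 0"

definition smooth_fun_on :: "(real^'n::finite) set \<Rightarrow> (real^'n \<Rightarrow> real) \<Rightarrow> bool" where
  "smooth_fun_on U f \<longleftrightarrow>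
     (\<forall>is::'n list. continuous_on U (fold pd is f) \<and>
        (\<forall>i. \<forall>x\<in>U. ((\<lambda>t. fold pd is f (x + t *\<^sub>R axis i 1))
                      has_real_derivative pd i (fold pd is f) x) (at 0)))"

definition smooth_vf_on :: "(real^'n::finite) set \<Rightarrow> (real^'n \<Rightarrow> real^'n) \<Rightarrow> bool" where
  "smooth_vf_on U X \<longleftrightarrow> (\<forall>k. smooth_fun_on U (\<lambda>x. X x $ k))"

definition smooth_tf_on :: "(real^'n::finite) set \<Rightarrow> (real^'n \<Rightarrow> real^'n^'n) \<Rightarrow> bool" where
  "smooth_tf_on U A \<longleftrightarrow> (\<forall>k l. smooth_fun_on U (\<lambda>x. A x $ k $ l))"

definition gm :: "(real^'n::finite \<Rightarrow> real^'n^'n) \<Rightarrow> real^'n \<Rightarrow> real^'n \<Rightarrow> real^'n \<Rightarrow> real" where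
  "gm g p X Y = X \<bullet> (g p *v Y)"

definition riemannian_metric_on :: "(real^'n::finite) set \<Rightarrow> (real^'n \<Rightarrow> real^'n^'n) \<Rightarrow> bool" where
  "riemannian_metric_on U g \<longleftrightarrow> smooth_tf_on U g \<and>
     (\<forall>p\<in>U. transpose (g p) = g p \<and> (\<forall>X. X \<noteq> 0 \<longrightarrow> gm g p X X > 0))"

definition dd :: "real^'n::finite \<Rightarrow> (real^'n \<Rightarrow> real^'n) \<Rightarrow> real^'n \<Rightarrow> real^'n" where
  "dd v Y p = (\<chi> k. \<Sum>i\<in>UNIV. v $ i * pd i (\<lambda>y. Y y $ k) p)"

definition christoffel :: "(real^'n::finite \<Rightarrow> real^'n^'n) \<Rightarrow> real^'n \<Rightarrow> real^'n \<Rightarrow> real^'n \<Rightarrow> real^'n" where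
  "christoffel g p v w = matrix_inv (g p) *v
     (\<chi> l. (1/2) * (\<Sum>i\<in>UNIV. \<Sum>j\<in>UNIV. v $ i * w $ j *
        (pd i (\<lambda>y. g y $ j $ l) p + pd j (\<lambda>y. g y $ i $ l) p - pd l (\<lambda>y. g y $ i $ j) p)))"

definition nabla :: "(real^'n::finite \<Rightarrow> real^'n^'n) \<Rightarrow> real^'n \<Rightarrow> (real^'n \<Rightarrow> real^'n) \<Rightarrow> real^'n \<Rightarrow> real^'n" where
  "nabla g v Y p = dd v Y p + christoffel g p v (Y p)"

text \<open>R(u,v)w = nabla_u nabla_v w - nabla_v nabla_u w - nabla_[u,v] w, computed with the
coordinate-constant extensions of u, v, w (whose bracket vanishes); R is tensorial.\<close>
definition curv :: "(real^'n::finite \<Rightarrow> real^'n^'n) \<Rightarrow> real^'n \<Rightarrow> real^'n \<Rightarrow> real^'n \<Rightarrow> real^'n \<Rightarrow> real^'n" where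
  "curv g p u v w = nabla g u (\<lambda>q. nabla g v (\<lambda>_. w) q) p - nabla g v (\<lambda>q. nabla g u (\<lambda>_. w) q) p"

definition curv4 :: "(real^'n::finite \<Rightarrow> real^'n^'n) \<Rightarrow> real^'n \<Rightarrow> real^'n \<Rightarrow> real^'n \<Rightarrow> real^'n \<Rightarrow> real^'n \<Rightarrow> real" where
  "curv4 g p X Y Z W = gm g p (curv g p X Y Z) W"

text \<open>eta is a covector field, eta(X) at p is eta p \<bullet> X.\<close>
definition almost_contact_metric_on ::
  "(real^'n::finite) set \<Rightarrow> (real^'n \<Rightarrow> real^'n^'n) \<Rightarrow> (real^'n \<Rightarrow> real^'n) \<Rightarrow> (real^'n \<Rightarrow> real^'n)
   \<Rightarrow> (real^'n \<Rightarrow> real^'n^'n) \<Rightarrow> bool" where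
  "almost_contact_metric_on U phi eta xi g \<longleftrightarrow>
     riemannian_metric_on U g \<and> smooth_tf_on U phi \<and> smooth_vf_on U eta \<and> smooth_vf_on U xi \<and>
     (\<forall>p\<in>U. (\<forall>X. phi p *v (phi p *v X) = - X + (eta p \<bullet> X) *\<^sub>R xi p) \<and>
             eta p \<bullet> xi p = 1 \<and>
             (\<forall>X. eta p \<bullet> (phi p *v X) = 0) \<and>
             phi p *v xi p = 0 \<and>
             (\<forall>X Y. gm g p (phi p *v X) (phi p *v Y) = gm g p X Y - (eta p \<bullet> X) * (eta p \<bullet> Y)) \<and>
             (\<forall>X. eta p \<bullet> X = gm g p (xi p) X))"

definition kenmotsu_on ::
  "(real^'n::finite) set \<Rightarrow> (real^'n \<Rightarrow> real^'n^'n) \<Rightarrow> (real^'n \<Rightarrow> real^'n) \<Rightarrow> (real^'n \<Rightarrow> real^'n)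
   \<Rightarrow> (real^'n \<Rightarrow> real^'n^'n) \<Rightarrow> bool" where
  "kenmotsu_on U phi eta xi g \<longleftrightarrow>
     almost_contact_metric_on U phi eta xi g \<and>
     (\<forall>p\<in>U. \<forall>X Y. nabla g X (\<lambda>q. phi q *v Y) p - phi p *v nabla g X (\<lambda>_. Y) p
                 = gm g p (phi p *v X) Y *\<^sub>R xi p - (eta p \<bullet> Y) *\<^sub>R (phi p *v X))"

definition three_kenmotsu_on ::
  "(real^'n::finite) set \<Rightarrow> (nat \<Rightarrow> real^'n \<Rightarrow> real^'n^'n) \<Rightarrow> (real^'n \<Rightarrow> real^'n) \<Rightarrow> (real^'n \<Rightarrow> real^'n)
   \<Rightarrow> (real^'n \<Rightarrow> real^'n^'n) \<Rightarrow> bool" where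
  "three_kenmotsu_on U phi eta xi g \<longleftrightarrow>
     (\<forall>a\<in>{1,2,3}. kenmotsu_on U (phi a) eta xi g) \<and>
     (\<forall>p\<in>U. phi 3 p = phi 1 p ** phi 2 p \<and> phi 1 p = phi 2 p ** phi 3 p \<and>
             phi 2 p = phi 3 p ** phi 1 p)"

definition hol_sec_curv ::
  "(nat \<Rightarrow> real^'n::finite \<Rightarrow> real^'n^'n) \<Rightarrow> (real^'n \<Rightarrow> real^'n^'n) \<Rightarrow> nat \<Rightarrow> real^'n \<Rightarrow> real^'n \<Rightarrow> real" where
  "hol_sec_curv phi g a p X =
     - curv4 g p X (phi a p *v X) X (phi a p *v X) / (gm g p X X)^2"

end

(* In a chart the Levi-Civita connection is the coordinate derivative plus the Christoffel
   symbols, so everything reduces to identities between first and second partial derivatives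
   of the smooth fields g, phi_a, eta, xi at p.  Schwarz's theorem gives the symmetries of the
   curvature tensor: antisymmetry in each pair, the first Bianchi identity, hence pair symmetry.
   Differentiating the Kenmotsu identity (nabla_X phi) Y = g(phi X, Y) xi - eta(Y) phi X once more
   and antisymmetrising in X, Y, using nabla_X xi = X - eta(X) xi, yields
     R(X,Y) phi Z - phi R(X,Y) Z = g(Y,Z) phi X - g(X,Z) phi Y + g(phi Y,Z) X - g(phi X,Z) Y.
   For horizontal X put i = phi_1 X, j = phi_2 X, k = phi_3 X, so that phi_1 j = k, phi_1 k = -j
   and phi_2 i = -k.  This commutation rule turns each of R(X,i,j,k), R(i,j,X,k), R(j,X,i,k)
   into g(X,X)^2 minus one of the three terms R(X, phi_a X, X, phi_a X); the first three sum
   to zero by the Bianchi identity, so the latter sum to 3 g(X,X)^2. *)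

theory Submission
  imports Defs
begin

section \<open>Partial derivatives of vector-valued functions on \<open>real^'n\<close>\<close>

definition has_partial_derivative ::
  "'n::finite \<Rightarrow> (real^'n \<Rightarrow> 'b::real_normed_vector) \<Rightarrow> real^'n \<Rightarrow> 'b \<Rightarrow> bool" where
  "has_partial_derivative i F q d \<longleftrightarrow> ((\<lambda>t. F (q + t *\<^sub>R axis i 1)) has_vector_derivative d) (at 0)"

definition partial_differentiable :: "(real^'n::finite \<Rightarrow> 'b::real_normed_vector) \<Rightarrow> real^'n \<Rightarrow> bool" where
  "partial_differentiable F p \<longleftrightarrow> (\<forall>i. \<exists>d. has_partial_derivative i F p d)"

definition partial_deriv :: "'n::finite \<Rightarrow> (real^'n \<Rightarrow> 'b::real_normed_vector) \<Rightarrow> real^'n \<Rightarrow> 'b" where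
  "partial_deriv i F p = vector_derivative (\<lambda>t. F (p + t *\<^sub>R axis i 1)) (at 0)"

text \<open>Only partial derivatives along the coordinate axes are available, so the derivative in
  direction \<open>X\<close> is their linear combination, as in \<^const>\<open>dd\<close>.\<close>

definition dir_deriv :: "real^'n::finite \<Rightarrow> (real^'n \<Rightarrow> 'b::real_normed_vector) \<Rightarrow> real^'n \<Rightarrow> 'b" where
  "dir_deriv X F p = (\<Sum>i\<in>UNIV. X $ i *\<^sub>R partial_deriv i F p)"

lemma has_vector_derivative_vec_nth_iff:
  fixes f :: "real \<Rightarrow> 'a::euclidean_space^'n"
  shows "(f has_vector_derivative d) (at x) \<longleftrightarrow> (\<forall>k. ((\<lambda>t. f t $ k) has_vector_derivative d $ k) (at x))"
proof
  assume "(f has_vector_derivative d) (at x)"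
  then show "\<forall>k. ((\<lambda>t. f t $ k) has_vector_derivative d $ k) (at x)"
    using bounded_linear.has_vector_derivative[OF bounded_linear_vec_nth] by blast
next
  assume a: "\<forall>k. ((\<lambda>t. f t $ k) has_vector_derivative d $ k) (at x)"
  show "(f has_vector_derivative d) (at x)"
    unfolding has_vector_derivative_def
  proof (subst has_derivative_componentwise_within, intro ballI)
    fix b :: "'a^'n" assume "b \<in> Basis"
    then obtain k u where b: "b = axis k u" and u: "u \<in> Basis" by (auto simp: Basis_vec_def)
    have "((\<lambda>t. f t $ k) has_derivative (\<lambda>t. t *\<^sub>R d $ k)) (at x)"
      using a unfolding has_vector_derivative_def by blast
    then have "((\<lambda>t. f t $ k \<bullet> u) has_derivative (\<lambda>t. (t *\<^sub>R d $ k) \<bullet> u)) (at x)"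
      using has_derivative_componentwise_within[THEN iffD1] u by blast
    then show "((\<lambda>t. f t \<bullet> b) has_derivative (\<lambda>t. (t *\<^sub>R d) \<bullet> b)) (at x)"
      unfolding b by (simp add: inner_axis)
  qed
qed

lemma has_partial_derivative_vec_iff:
  "has_partial_derivative i (F :: real^'n::finite \<Rightarrow> 'a::euclidean_space^'m) q d \<longleftrightarrow>
     (\<forall>k. has_partial_derivative i (\<lambda>y. F y $ k) q (d $ k))"
  unfolding has_partial_derivative_def
  using has_vector_derivative_vec_nth_iff[of "\<lambda>t. F (q + t *\<^sub>R axis i 1)" d 0] by simp

lemma has_partial_derivative_mat_iff:
  "has_partial_derivative i (F :: real^'n::finite \<Rightarrow> real^'m^'k) q d \<longleftrightarrow>
     (\<forall>k l. has_partial_derivative i (\<lambda>y. F y $ k $ l) q (d $ k $ l))"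
  by (simp add: has_partial_derivative_vec_iff[of i F] has_partial_derivative_vec_iff[of i "\<lambda>y. F y $ _"])

lemma has_partial_derivative_imp_pd: "has_partial_derivative i f q d \<Longrightarrow> pd i f q = d"
  unfolding has_partial_derivative_def pd_def
  by (simp add: DERIV_imp_deriv has_real_derivative_iff_has_vector_derivative)

lemma has_partial_derivative_imp_partial_deriv:
  "has_partial_derivative i F p d \<Longrightarrow> partial_deriv i F p = d"
  unfolding has_partial_derivative_def partial_deriv_def by (rule vector_derivative_at)

lemma has_partial_derivative_const: "has_partial_derivative i (\<lambda>y. c) q 0"
  unfolding has_partial_derivative_def by simp

lemma has_partial_derivative_add:
  "has_partial_derivative i F q d1 \<Longrightarrow> has_partial_derivative i G q d2 \<Longrightarrow>
     has_partial_derivative i (\<lambda>y. F y + G y) q (d1 + d2)"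
  unfolding has_partial_derivative_def by (rule has_vector_derivative_add)

lemma has_partial_derivative_diff:
  "has_partial_derivative i F q d1 \<Longrightarrow> has_partial_derivative i G q d2 \<Longrightarrow>
     has_partial_derivative i (\<lambda>y. F y - G y) q (d1 - d2)"
  unfolding has_partial_derivative_def by (rule has_vector_derivative_diff)

lemma has_partial_derivative_sum:
  "(\<And>j. j \<in> J \<Longrightarrow> has_partial_derivative i (F j) q (d j)) \<Longrightarrow>
     has_partial_derivative i (\<lambda>y. \<Sum>j\<in>J. F j y) q (\<Sum>j\<in>J. d j)"
  unfolding has_partial_derivative_def by (rule has_vector_derivative_sum)

lemma has_partial_derivative_bilinear:
  assumes "bounded_bilinear B" "has_partial_derivative i F q d1" "has_partial_derivative i G q d2"
  shows "has_partial_derivative i (\<lambda>y. B (F y) (G y)) q (B (F q) d2 + B d1 (G q))"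
  using bounded_bilinear.has_vector_derivative[OF assms(1), of "\<lambda>t. F (q + t *\<^sub>R axis i 1)" d1 0 UNIV
     "\<lambda>t. G (q + t *\<^sub>R axis i 1)" d2] assms(2,3)
  unfolding has_partial_derivative_def by simp

lemma has_partial_derivative_transform_open:
  assumes "open U" "q \<in> U" "\<And>y. y \<in> U \<Longrightarrow> F y = G y" "has_partial_derivative i F q d"
  shows "has_partial_derivative i G q d"
  unfolding has_partial_derivative_def
proof (rule has_vector_derivative_transform_within_open[OF assms(4)[unfolded has_partial_derivative_def]])
  show "open {t::real. q + t *\<^sub>R axis i 1 \<in> U}"
    using continuous_open_vimage[OF assms(1), of "\<lambda>t::real. q + t *\<^sub>R axis i 1"]
    by (auto simp: vimage_def intro!: continuous_intros)
qed (use assms(2,3) in auto)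

lemma bounded_bilinear_matrix_vector_mult:
  "bounded_bilinear ((*v) :: real^'n::finite^'m::finite \<Rightarrow> real^'n \<Rightarrow> real^'m)"
  unfolding bilinear_conv_bounded_bilinear[symmetric] bilinear_def
  by (auto intro!: linearI simp: matrix_vector_right_distrib matrix_vector_mult_add_rdistrib
      matrix_vector_mult_scaleR scaleR_matrix_vector_assoc)

lemma smooth_fun_on_has_partial_derivative:
  assumes "smooth_fun_on U f" "q \<in> U"
  shows "has_partial_derivative i f q (pd i f q)"
proof -
  have "((\<lambda>t. fold pd [] f (q + t *\<^sub>R axis i 1)) has_real_derivative pd i (fold pd [] f) q) (at 0)"
    using assms unfolding smooth_fun_on_def by blast
  then show ?thesis
    by (simp add: has_partial_derivative_def has_real_derivative_iff_has_vector_derivative)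
qed

lemma smooth_fun_on_pd:
  fixes f :: "real^'n::finite \<Rightarrow> real"
  assumes "smooth_fun_on U f"
  shows "smooth_fun_on U (pd j f)"
  unfolding smooth_fun_on_def
proof
  fix "is" :: "'n list"
  from assms[unfolded smooth_fun_on_def, rule_format, of "j # is"]
  show "continuous_on U (fold pd is (pd j f)) \<and>
    (\<forall>i. \<forall>x\<in>U. ((\<lambda>t. fold pd is (pd j f) (x + t *\<^sub>R axis i 1)) has_real_derivative
      pd i (fold pd is (pd j f)) x) (at 0))"
    by simp
qed

lemma partial_differentiableI:
  "(\<And>i. has_partial_derivative i F p (D i)) \<Longrightarrow> partial_differentiable F p"
  unfolding partial_differentiable_def by blast

lemma partial_differentiable_has_partial_derivative:
  "partial_differentiable F p \<Longrightarrow> has_partial_derivative i F p (partial_deriv i F p)"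
  unfolding partial_differentiable_def using has_partial_derivative_imp_partial_deriv by metis

lemma dir_deriv_eq:
  assumes "\<And>i. has_partial_derivative i F p (D i)"
  shows "dir_deriv X F p = (\<Sum>i\<in>UNIV. X $ i *\<^sub>R D i)"
  unfolding dir_deriv_def by (simp add: has_partial_derivative_imp_partial_deriv[OF assms])

lemma partial_differentiable_const [simp]: "partial_differentiable (\<lambda>q. c) p"
  by (rule partial_differentiableI[OF has_partial_derivative_const])

lemma dir_deriv_const [simp]: "dir_deriv X (\<lambda>q. c) p = 0"
  by (subst dir_deriv_eq[OF has_partial_derivative_const]) simp

lemma
  assumes "partial_differentiable F p" "partial_differentiable G p"
  shows partial_differentiable_add [simp]: "partial_differentiable (\<lambda>q. F q + G q) p"
    and dir_deriv_add [simp]: "dir_deriv X (\<lambda>q. F q + G q) p = dir_deriv X F p + dir_deriv X G p"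
proof -
  note hpd = has_partial_derivative_add[OF partial_differentiable_has_partial_derivative[OF assms(1)]
      partial_differentiable_has_partial_derivative[OF assms(2)]]
  show "partial_differentiable (\<lambda>q. F q + G q) p"
    by (rule partial_differentiableI[OF hpd])
  show "dir_deriv X (\<lambda>q. F q + G q) p = dir_deriv X F p + dir_deriv X G p"
    by (simp add: dir_deriv_def has_partial_derivative_imp_partial_deriv[OF hpd] scaleR_right_distrib sum.distrib)
qed

lemma
  assumes "partial_differentiable F p" "partial_differentiable G p"
  shows partial_differentiable_diff [simp]: "partial_differentiable (\<lambda>q. F q - G q) p"
    and dir_deriv_diff [simp]: "dir_deriv X (\<lambda>q. F q - G q) p = dir_deriv X F p - dir_deriv X G p"
proof -
  note hpd = has_partial_derivative_diff[OF partial_differentiable_has_partial_derivative[OF assms(1)]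
      partial_differentiable_has_partial_derivative[OF assms(2)]]
  show "partial_differentiable (\<lambda>q. F q - G q) p"
    by (rule partial_differentiableI[OF hpd])
  show "dir_deriv X (\<lambda>q. F q - G q) p = dir_deriv X F p - dir_deriv X G p"
    by (simp add: dir_deriv_def has_partial_derivative_imp_partial_deriv[OF hpd] scaleR_diff_right sum_subtractf)
qed

lemma
  assumes "\<And>j. j \<in> J \<Longrightarrow> partial_differentiable (F j) p"
  shows partial_differentiable_sum [simp]: "partial_differentiable (\<lambda>q. \<Sum>j\<in>J. F j q) p"
    and dir_deriv_sum [simp]: "dir_deriv X (\<lambda>q. \<Sum>j\<in>J. F j q) p = (\<Sum>j\<in>J. dir_deriv X (F j) p)"
proof -
  note hpd = has_partial_derivative_sum[OF partial_differentiable_has_partial_derivative[OF assms]]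
  show "partial_differentiable (\<lambda>q. \<Sum>j\<in>J. F j q) p"
    by (rule partial_differentiableI[OF hpd])
  show "dir_deriv X (\<lambda>q. \<Sum>j\<in>J. F j q) p = (\<Sum>j\<in>J. dir_deriv X (F j) p)"
    by (simp add: dir_deriv_def has_partial_derivative_imp_partial_deriv[OF hpd] scaleR_sum_right
        sum.swap[of _ J])
qed

lemma
  assumes B: "bounded_bilinear B" and F: "partial_differentiable F p" and G: "partial_differentiable G p"
  shows partial_differentiable_bilinear: "partial_differentiable (\<lambda>q. B (F q) (G q)) p"
    and dir_deriv_bilinear:
      "dir_deriv X (\<lambda>q. B (F q) (G q)) p = B (F p) (dir_deriv X G p) + B (dir_deriv X F p) (G p)"
proof -
  note hpd = has_partial_derivative_bilinear[OF B partial_differentiable_has_partial_derivative[OF F]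
      partial_differentiable_has_partial_derivative[OF G]]
  show "partial_differentiable (\<lambda>q. B (F q) (G q)) p"
    by (rule partial_differentiableI[OF hpd])
  show "dir_deriv X (\<lambda>q. B (F q) (G q)) p = B (F p) (dir_deriv X G p) + B (dir_deriv X F p) (G p)"
    by (simp add: dir_deriv_def has_partial_derivative_imp_partial_deriv[OF hpd] scaleR_right_distrib
        sum.distrib bounded_bilinear.sum_left[OF B] bounded_bilinear.sum_right[OF B]
        bounded_bilinear.scaleR_left[OF B] bounded_bilinear.scaleR_right[OF B])
qed

lemmas partial_differentiable_mult [simp] = partial_differentiable_bilinear[OF bounded_bilinear_mult]
  and dir_deriv_mult [simp] = dir_deriv_bilinear[OF bounded_bilinear_mult]
  and partial_differentiable_scaleR [simp] = partial_differentiable_bilinear[OF bounded_bilinear_scaleR]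
  and dir_deriv_scaleR [simp] = dir_deriv_bilinear[OF bounded_bilinear_scaleR]
  and partial_differentiable_inner [simp] = partial_differentiable_bilinear[OF bounded_bilinear_inner]
  and dir_deriv_inner [simp] = dir_deriv_bilinear[OF bounded_bilinear_inner]
  and partial_differentiable_matrix_vector_mult [simp] =
    partial_differentiable_bilinear[OF bounded_bilinear_matrix_vector_mult]
  and dir_deriv_matrix_vector_mult [simp] = dir_deriv_bilinear[OF bounded_bilinear_matrix_vector_mult]

lemma
  assumes "partial_differentiable (F :: real^'n::finite \<Rightarrow> 'a::euclidean_space^'m) p"
  shows partial_differentiable_vec_nth [simp]: "partial_differentiable (\<lambda>q. F q $ k) p"
    and partial_deriv_vec_nth: "partial_deriv i (\<lambda>q. F q $ k) p = partial_deriv i F p $ k"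
proof -
  have hpd: "has_partial_derivative i (\<lambda>q. F q $ k) p (partial_deriv i F p $ k)" for i
    using partial_differentiable_has_partial_derivative[OF assms] has_partial_derivative_vec_iff by blast
  show "partial_differentiable (\<lambda>q. F q $ k) p"
    by (rule partial_differentiableI[OF hpd])
  show "partial_deriv i (\<lambda>q. F q $ k) p = partial_deriv i F p $ k"
    by (rule has_partial_derivative_imp_partial_deriv[OF hpd])
qed

lemma partial_differentiable_vec_lambda [simp]:
  assumes "\<And>k. partial_differentiable (f k) p"
  shows "partial_differentiable (\<lambda>q. (\<chi> k. f k q) :: 'a::euclidean_space^'m::finite) p"
proof (rule partial_differentiableI)
  show "has_partial_derivative i (\<lambda>q. (\<chi> k. f k q) :: 'a^'m) p (\<chi> k. partial_deriv i (f k) p)" for i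
    by (simp add: has_partial_derivative_vec_iff partial_differentiable_has_partial_derivative[OF assms])
qed

lemma
  assumes "open U" "p \<in> U" "\<And>q. q \<in> U \<Longrightarrow> F q = G q" "partial_differentiable F p"
  shows partial_differentiable_transform_open: "partial_differentiable G p"
    and partial_deriv_transform_open: "partial_deriv i F p = partial_deriv i G p"
    and dir_deriv_transform_open: "dir_deriv X F p = dir_deriv X G p"
proof -
  have hpd: "has_partial_derivative i G p (partial_deriv i F p)" for i
    by (rule has_partial_derivative_transform_open[OF assms(1-3)
          partial_differentiable_has_partial_derivative[OF assms(4)]])
  show "partial_differentiable G p"
    by (rule partial_differentiableI[OF hpd])
  show "partial_deriv i F p = partial_deriv i G p"
    by (rule has_partial_derivative_imp_partial_deriv[OF hpd, symmetric])
  show "dir_deriv X F p = dir_deriv X G p"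
    by (simp add: dir_deriv_def has_partial_derivative_imp_partial_deriv[OF hpd])
qed

lemma pd_eq_partial_deriv: "partial_differentiable f p \<Longrightarrow> pd i f p = partial_deriv i f p"
  by (rule has_partial_derivative_imp_pd[OF partial_differentiable_has_partial_derivative])

lemma dd_eq_dir_deriv: "partial_differentiable Y p \<Longrightarrow> dd v Y p = dir_deriv v Y p"
  unfolding dd_def dir_deriv_def
  by (simp add: vec_eq_iff sum_component pd_eq_partial_deriv partial_deriv_vec_nth)

section \<open>Symmetry of second derivatives\<close>

lemma has_real_derivative_along_axis:
  fixes f :: "real^'n::finite \<Rightarrow> real"
  assumes "has_partial_derivative i f (c + s0 *\<^sub>R axis i 1) d"
  shows "((\<lambda>s. f (c + s *\<^sub>R axis i 1)) has_real_derivative d) (at s0)"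
proof -
  have "((\<lambda>t. f (c + s0 *\<^sub>R axis i 1 + t *\<^sub>R axis i 1)) has_real_derivative d) (at 0)"
    using assms unfolding has_partial_derivative_def has_real_derivative_iff_has_vector_derivative .
  moreover have "(\<lambda>t. f (c + s0 *\<^sub>R axis i 1 + t *\<^sub>R axis i 1)) = (\<lambda>t. f (c + (t + s0) *\<^sub>R axis i 1))"
    by (simp add: algebra_simps)
  ultimately show ?thesis
    using DERIV_shift[of "\<lambda>s. f (c + s *\<^sub>R axis i 1)" d 0 s0] by simp
qed

lemma smooth_fun_on_has_real_derivative_plane:
  fixes f :: "real^'n::finite \<Rightarrow> real"
  assumes sm: "smooth_fun_on U f" and in_U: "p + s *\<^sub>R axis i 1 + t *\<^sub>R axis j 1 \<in> U"
  shows "((\<lambda>s. f (p + s *\<^sub>R axis i 1 + t *\<^sub>R axis j 1)) has_real_derivative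
      pd i f (p + s *\<^sub>R axis i 1 + t *\<^sub>R axis j 1)) (at s)"
    and "((\<lambda>t. f (p + s *\<^sub>R axis i 1 + t *\<^sub>R axis j 1)) has_real_derivative
      pd j f (p + s *\<^sub>R axis i 1 + t *\<^sub>R axis j 1)) (at t)"
proof -
  have swap: "p + s *\<^sub>R axis i 1 + t *\<^sub>R axis j 1 = p + t *\<^sub>R axis j 1 + s *\<^sub>R axis i 1"
    by (simp add: algebra_simps)
  have "has_partial_derivative i f (p + t *\<^sub>R axis j 1 + s *\<^sub>R axis i 1)
      (pd i f (p + s *\<^sub>R axis i 1 + t *\<^sub>R axis j 1))"
    using smooth_fun_on_has_partial_derivative[OF sm in_U, of i] swap by metis
  moreover have "(\<lambda>s. f (p + s *\<^sub>R axis i 1 + t *\<^sub>R axis j 1)) = (\<lambda>s. f (p + t *\<^sub>R axis j 1 + s *\<^sub>R axis i 1))"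
    by (simp add: algebra_simps)
  ultimately show "((\<lambda>s. f (p + s *\<^sub>R axis i 1 + t *\<^sub>R axis j 1)) has_real_derivative
      pd i f (p + s *\<^sub>R axis i 1 + t *\<^sub>R axis j 1)) (at s)"
    using has_real_derivative_along_axis by metis
  show "((\<lambda>t. f (p + s *\<^sub>R axis i 1 + t *\<^sub>R axis j 1)) has_real_derivative
      pd j f (p + s *\<^sub>R axis i 1 + t *\<^sub>R axis j 1)) (at t)"
    by (rule has_real_derivative_along_axis[OF smooth_fun_on_has_partial_derivative[OF sm in_U]])
qed

lemma norm_axis_plane_le: "norm (s *\<^sub>R axis k 1 + t *\<^sub>R axis l 1 :: real^'n::finite) \<le> \<bar>s\<bar> + \<bar>t\<bar>"
  using norm_triangle_ineq[of "s *\<^sub>R axis k 1 :: real^'n" "t *\<^sub>R axis l 1"] by simp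

lemma mixed_difference_mean_value:
  fixes f :: "real^'n::finite \<Rightarrow> real"
  assumes sm: "smooth_fun_on U f" and h: "h > 0" and ball: "ball p (3 * h) \<subseteq> U"
  shows "\<exists>y\<in>ball p (3 * h).
    f (p + h *\<^sub>R axis i 1 + h *\<^sub>R axis j 1) - f (p + h *\<^sub>R axis i 1) - f (p + h *\<^sub>R axis j 1) + f p
      = h * h * pd j (pd i f) y"
proof -
  define F where "F s t = f (p + s *\<^sub>R axis i 1 + t *\<^sub>R axis j 1)" for s t
  have square: "p + s *\<^sub>R axis i 1 + t *\<^sub>R axis j 1 \<in> ball p (3 * h)"
    if "\<bar>s\<bar> \<le> h" "\<bar>t\<bar> \<le> h" for s t
    using norm_axis_plane_le[of s i t j] that h by (simp add: dist_norm norm_minus_commute algebra_simps)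
  have "\<exists>\<sigma>>0. \<sigma> < h \<and> (F h h - F h 0) - (F 0 h - F 0 0)
      = (h - 0) * (pd i f (p + \<sigma> *\<^sub>R axis i 1 + h *\<^sub>R axis j 1) - pd i f (p + \<sigma> *\<^sub>R axis i 1 + 0 *\<^sub>R axis j 1))"
  proof (rule MVT2[OF h])
    fix s assume "0 \<le> s" "s \<le> h"
    then have in_U: "p + s *\<^sub>R axis i 1 + h *\<^sub>R axis j 1 \<in> U" "p + s *\<^sub>R axis i 1 + 0 *\<^sub>R axis j 1 \<in> U"
      using square[of s h] square[of s 0] h ball by auto
    then show "((\<lambda>s. F s h - F s 0) has_real_derivative
        pd i f (p + s *\<^sub>R axis i 1 + h *\<^sub>R axis j 1) - pd i f (p + s *\<^sub>R axis i 1 + 0 *\<^sub>R axis j 1)) (at s)"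
      unfolding F_def by (intro DERIV_diff smooth_fun_on_has_real_derivative_plane(1)[OF sm] in_U)
  qed
  then obtain \<sigma> where \<sigma>: "0 < \<sigma>" "\<sigma> < h" and
    \<sigma>_eq: "(F h h - F h 0) - (F 0 h - F 0 0)
      = h * (pd i f (p + \<sigma> *\<^sub>R axis i 1 + h *\<^sub>R axis j 1) - pd i f (p + \<sigma> *\<^sub>R axis i 1 + 0 *\<^sub>R axis j 1))"
    by auto
  have "\<exists>\<tau>>0. \<tau> < h \<and> pd i f (p + \<sigma> *\<^sub>R axis i 1 + h *\<^sub>R axis j 1) - pd i f (p + \<sigma> *\<^sub>R axis i 1 + 0 *\<^sub>R axis j 1)
      = (h - 0) * pd j (pd i f) (p + \<sigma> *\<^sub>R axis i 1 + \<tau> *\<^sub>R axis j 1)"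
    using square \<sigma> ball
    by (intro MVT2[OF h] smooth_fun_on_has_real_derivative_plane(2)[OF smooth_fun_on_pd[OF sm]]) auto
  then obtain \<tau> where "0 < \<tau>" "\<tau> < h" and
    \<tau>_eq: "pd i f (p + \<sigma> *\<^sub>R axis i 1 + h *\<^sub>R axis j 1) - pd i f (p + \<sigma> *\<^sub>R axis i 1 + 0 *\<^sub>R axis j 1)
      = h * pd j (pd i f) (p + \<sigma> *\<^sub>R axis i 1 + \<tau> *\<^sub>R axis j 1)"
    by auto
  then show ?thesis
    using \<sigma> \<sigma>_eq square[of \<sigma> \<tau>] by (intro bexI[of _ "p + \<sigma> *\<^sub>R axis i 1 + \<tau> *\<^sub>R axis j 1"]) (simp_all add: F_def)
qed

lemma smooth_fun_on_pd_commute: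
  fixes f :: "real^'n::finite \<Rightarrow> real"
  assumes sm: "smooth_fun_on U f" and U: "open U" "p \<in> U"
  shows "pd i (pd j f) p = pd j (pd i f) p"
proof (rule ccontr)
  define Fij where "Fij = pd i (pd j f)"
  define Fji where "Fji = pd j (pd i f)"
  define \<epsilon> where "\<epsilon> = \<bar>Fij p - Fji p\<bar> / 2"
  assume "pd i (pd j f) p \<noteq> pd j (pd i f) p"
  then have \<epsilon>: "\<epsilon> > 0" unfolding \<epsilon>_def Fij_def Fji_def by simp
  have "continuous_on U (fold pd [j, i] f)" "continuous_on U (fold pd [i, j] f)"
    using sm unfolding smooth_fun_on_def by blast+
  then have "continuous_on U Fij" "continuous_on U Fji" unfolding Fij_def Fji_def by simp_all
  then obtain d1 d2 where "d1 > 0" "d2 > 0"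
    and d1: "\<forall>y\<in>U. dist y p < d1 \<longrightarrow> dist (Fij y) (Fij p) < \<epsilon>"
    and d2: "\<forall>y\<in>U. dist y p < d2 \<longrightarrow> dist (Fji y) (Fji p) < \<epsilon>"
    using \<epsilon> U(2) unfolding continuous_on_iff by blast
  obtain d3 where "d3 > 0" "ball p d3 \<subseteq> U" using U open_contains_ball by blast
  define h where "h = min d1 (min d2 d3) / 3"
  have h: "h > 0" "ball p (3 * h) \<subseteq> U"
    using \<open>d1 > 0\<close> \<open>d2 > 0\<close> \<open>d3 > 0\<close> \<open>ball p d3 \<subseteq> U\<close> by (auto simp: h_def)
  have close: "\<bar>Fij y - Fij p\<bar> < \<epsilon>" "\<bar>Fji y - Fji p\<bar> < \<epsilon>" if "y \<in> ball p (3 * h)" for y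
    using that h(2) d1 d2 by (auto simp: h_def dist_real_def dist_commute)
  obtain y1 where "y1 \<in> ball p (3 * h)" and \<Delta>1:
    "f (p + h *\<^sub>R axis i 1 + h *\<^sub>R axis j 1) - f (p + h *\<^sub>R axis i 1) - f (p + h *\<^sub>R axis j 1) + f p
      = h * h * Fji y1"
    using mixed_difference_mean_value[OF sm h, of i j] unfolding Fji_def by blast
  obtain y2 where "y2 \<in> ball p (3 * h)" and \<Delta>2:
    "f (p + h *\<^sub>R axis j 1 + h *\<^sub>R axis i 1) - f (p + h *\<^sub>R axis j 1) - f (p + h *\<^sub>R axis i 1) + f p
      = h * h * Fij y2"
    using mixed_difference_mean_value[OF sm h, of j i] unfolding Fij_def by blast
  have "Fji y1 = Fij y2"
    using \<Delta>1 \<Delta>2 h(1) by (simp add: algebra_simps)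
  then show False
    using close(2)[OF \<open>y1 \<in> _\<close>] close(1)[OF \<open>y2 \<in> _\<close>] unfolding \<epsilon>_def by argo
qed

lemma smooth_vf_on_partial_differentiable:
  assumes "smooth_vf_on U V" "q \<in> U"
  shows "partial_differentiable V q"
proof (rule partial_differentiableI)
  show "has_partial_derivative i V q (\<chi> k. pd i (\<lambda>y. V y $ k) q)" for i
    using assms
    by (auto simp: has_partial_derivative_vec_iff smooth_vf_on_def intro: smooth_fun_on_has_partial_derivative)
qed

lemma smooth_tf_on_has_partial_derivative:
  assumes "smooth_tf_on U M" "q \<in> U"
  shows "has_partial_derivative i M q (\<chi> k l. pd i (\<lambda>y. M y $ k $ l) q)"
  using assms
  by (auto simp: has_partial_derivative_mat_iff smooth_tf_on_def intro: smooth_fun_on_has_partial_derivative)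

lemma smooth_tf_on_partial_differentiable:
  "smooth_tf_on U M \<Longrightarrow> q \<in> U \<Longrightarrow> partial_differentiable M q"
  by (rule partial_differentiableI[OF smooth_tf_on_has_partial_derivative])

lemma smooth_tf_on_partial_deriv:
  "smooth_tf_on U M \<Longrightarrow> q \<in> U \<Longrightarrow> partial_deriv i M q = (\<chi> k l. pd i (\<lambda>y. M y $ k $ l) q)"
  by (rule has_partial_derivative_imp_partial_deriv[OF smooth_tf_on_has_partial_derivative])

lemma smooth_fun_on_partial_differentiable_pd:
  "smooth_fun_on U f \<Longrightarrow> q \<in> U \<Longrightarrow> partial_differentiable (pd i f) q"
  by (rule partial_differentiableI[OF smooth_fun_on_has_partial_derivative[OF smooth_fun_on_pd]])

lemma smooth_tf_on_partial_differentiable_partial_deriv: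
  assumes M: "smooth_tf_on U M" and U: "open U" "p \<in> U"
  shows "partial_differentiable (\<lambda>q. partial_deriv i M q) p"
proof (rule partial_differentiable_transform_open[OF U])
  show "partial_differentiable (\<lambda>q. \<chi> k l. pd i (\<lambda>y. M y $ k $ l) q) p"
    using M U(2) unfolding smooth_tf_on_def
    by (intro partial_differentiable_vec_lambda smooth_fun_on_partial_differentiable_pd) auto
qed (simp add: smooth_tf_on_partial_deriv[OF M])

lemma smooth_tf_on_partial_deriv_commute:
  assumes M: "smooth_tf_on U M" and U: "open U" "p \<in> U"
  shows "partial_deriv j (\<lambda>q. partial_deriv i M q) p = partial_deriv i (\<lambda>q. partial_deriv j M q) p"
proof -
  have sm: "smooth_fun_on U (\<lambda>y. M y $ k $ l)" for k l
    using M unfolding smooth_tf_on_def by blast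
  have second: "partial_deriv j (\<lambda>q. partial_deriv i M q) p = (\<chi> k l. pd j (pd i (\<lambda>y. M y $ k $ l)) p)"
    for i j
  proof -
    have hpd: "has_partial_derivative j (\<lambda>q. \<chi> k l. pd i (\<lambda>y. M y $ k $ l) q) p
        (\<chi> k l. pd j (pd i (\<lambda>y. M y $ k $ l)) p)"
      using smooth_fun_on_has_partial_derivative[OF smooth_fun_on_pd[OF sm] U(2)]
      by (simp add: has_partial_derivative_mat_iff)
    have "partial_deriv j (\<lambda>q. partial_deriv i M q) p = partial_deriv j (\<lambda>q. \<chi> k l. pd i (\<lambda>y. M y $ k $ l) q) p"
      by (rule partial_deriv_transform_open[OF U _ smooth_tf_on_partial_differentiable_partial_deriv[OF M U]])
        (simp add: smooth_tf_on_partial_deriv[OF M])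
    then show ?thesis
      using has_partial_derivative_imp_partial_deriv[OF hpd] by simp
  qed
  show ?thesis
    unfolding second by (simp add: smooth_fun_on_pd_commute[OF sm U])
qed

lemma smooth_tf_on_partial_differentiable_dir_deriv:
  "smooth_tf_on U M \<Longrightarrow> open U \<Longrightarrow> p \<in> U \<Longrightarrow> partial_differentiable (\<lambda>q. dir_deriv Y M q) p"
  unfolding dir_deriv_def by (simp add: smooth_tf_on_partial_differentiable_partial_deriv)

lemma smooth_tf_on_dir_deriv_commute:
  assumes M: "smooth_tf_on U M" and U: "open U" "p \<in> U"
  shows "dir_deriv X (\<lambda>q. dir_deriv Y M q) p = dir_deriv Y (\<lambda>q. dir_deriv X M q) p"
proof -
  have "dir_deriv X (\<lambda>q. dir_deriv Y M q) p
      = (\<Sum>i\<in>UNIV. \<Sum>j\<in>UNIV. (Y $ i * X $ j) *\<^sub>R partial_deriv j (\<lambda>q. partial_deriv i M q) p)"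
    unfolding dir_deriv_def[of Y]
    by (simp add: smooth_tf_on_partial_differentiable_partial_deriv[OF M U])
      (simp add: dir_deriv_def scaleR_sum_right)
  also have "\<dots> = (\<Sum>j\<in>UNIV. \<Sum>i\<in>UNIV. (Y $ i * X $ j) *\<^sub>R partial_deriv i (\<lambda>q. partial_deriv j M q) p)"
    by (subst sum.swap) (simp add: smooth_tf_on_partial_deriv_commute[OF M U])
  also have "\<dots> = dir_deriv Y (\<lambda>q. dir_deriv X M q) p"
    unfolding dir_deriv_def[of X]
    by (simp add: smooth_tf_on_partial_differentiable_partial_deriv[OF M U])
      (simp add: dir_deriv_def scaleR_sum_right mult.commute)
  finally show ?thesis .
qed

section \<open>Differentiability of the inverse matrix\<close>

lemma differentiable_prod:
  fixes f :: "'i \<Rightarrow> real \<Rightarrow> real"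
  assumes "finite I" "\<And>i. i \<in> I \<Longrightarrow> f i differentiable (at x)"
  shows "(\<lambda>t. \<Prod>i\<in>I. f i t) differentiable (at x)"
  using assms by (induction I rule: finite_induct) (simp_all add: prod.insert)

lemma differentiable_det:
  fixes A :: "real \<Rightarrow> real^'n::finite^'n"
  assumes "\<And>r c. (\<lambda>t. A t $ r $ c) differentiable (at x)"
  shows "(\<lambda>t. det (A t)) differentiable (at x)"
  unfolding det_def
  by (intro differentiable_sum ballI differentiable_mult differentiable_const differentiable_prod assms)
     (simp_all add: finite_permutations)

lemma matrix_inv_right:
  fixes M :: "real^'n::finite^'n"
  assumes "invertible M"
  shows "M ** matrix_inv M = mat 1"
proof -
  have "\<exists>A'. M ** A' = mat 1 \<and> A' ** M = mat 1" using assms unfolding invertible_def .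
  then have "M ** matrix_inv M = mat 1 \<and> matrix_inv M ** M = mat 1"
    unfolding matrix_inv_def by (rule someI_ex)
  then show ?thesis by simp
qed

lemma matrix_inv_entry_cramer:
  fixes M :: "real^'n::finite^'n"
  assumes "invertible M"
  shows "matrix_inv M $ k $ l = det (\<chi> r c. if c = k then axis l 1 $ r else M $ r $ c) / det M"
proof -
  have "M *v (matrix_inv M *v axis l 1) = axis l 1"
    by (simp add: matrix_vector_mul_assoc matrix_inv_right[OF assms])
  then have "matrix_inv M *v axis l 1 = (\<chi> k. det (\<chi> i j. if j = k then axis l 1 $ i else M $ i $ j) / det M)"
    using cramer[of M] assms invertible_det_nz by blast
  moreover have "(matrix_inv M *v axis l 1) $ k = matrix_inv M $ k $ l"
    by (simp add: matrix_vector_mult_basis column_def)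
  ultimately show ?thesis by simp
qed

lemma differentiable_matrix_inv_entry:
  fixes M :: "real \<Rightarrow> real^'n::finite^'n"
  assumes dM: "\<And>r c. (\<lambda>t. M t $ r $ c) differentiable (at 0)"
    and S: "open S" "0 \<in> S" and inv: "\<And>t. t \<in> S \<Longrightarrow> invertible (M t)"
  shows "(\<lambda>t. matrix_inv (M t) $ k $ l) differentiable (at 0)"
proof -
  have "(\<lambda>t. det (\<chi> r c. if c = k then axis l 1 $ r else M t $ r $ c) / det (M t)) differentiable (at 0)"
  proof (intro differentiable_divide differentiable_det)
    show "(\<lambda>t. (\<chi> r c. if c = k then axis l 1 $ r else M t $ r $ c) $ r $ c) differentiable at 0" for r c
      using dM by (cases "c = k") simp_all
    show "det (M 0) \<noteq> 0" using inv[OF S(2)] invertible_det_nz by blast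
  qed (rule dM)
  then obtain D where
    "((\<lambda>t. det (\<chi> r c. if c = k then axis l 1 $ r else M t $ r $ c) / det (M t)) has_real_derivative D) (at 0)"
    unfolding real_differentiable_def by blast
  then have "((\<lambda>t. matrix_inv (M t) $ k $ l) has_real_derivative D) (at 0)"
    by (rule has_field_derivative_transform_within_open[OF _ S]) (simp add: matrix_inv_entry_cramer[OF inv])
  then show ?thesis
    unfolding real_differentiable_def by blast
qed

lemma partial_differentiable_matrix_inv:
  fixes g :: "real^'n::finite \<Rightarrow> real^'n^'n"
  assumes dg: "partial_differentiable g p" and U: "open U" "p \<in> U"
    and inv: "\<And>q. q \<in> U \<Longrightarrow> invertible (g q)"
  shows "partial_differentiable (\<lambda>q. matrix_inv (g q)) p"
  unfolding partial_differentiable_def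
proof
  fix i
  define M where "M t = g (p + t *\<^sub>R axis i 1)" for t
  have "((\<lambda>t. M t $ r $ c) has_vector_derivative partial_deriv i g p $ r $ c) (at 0)" for r c
    using partial_differentiable_has_partial_derivative[OF dg, of i]
    unfolding has_partial_derivative_mat_iff has_partial_derivative_def M_def by blast
  then have dM: "(\<lambda>t. M t $ r $ c) differentiable (at 0)" for r c
    by (rule differentiableI_vector)
  have S: "open {t::real. p + t *\<^sub>R axis i 1 \<in> U}"
    using continuous_open_vimage[OF U(1), of "\<lambda>t::real. p + t *\<^sub>R axis i 1"]
    by (auto simp: vimage_def intro!: continuous_intros)
  have "\<exists>D. ((\<lambda>t. matrix_inv (M t) $ k $ l) has_real_derivative D) (at 0)" for k l
    using differentiable_matrix_inv_entry[OF dM S] U(2) inv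
    unfolding M_def real_differentiable_def by auto
  then obtain D where D: "\<And>k l. ((\<lambda>t. matrix_inv (M t) $ k $ l) has_real_derivative D k l) (at 0)"
    by metis
  have "has_partial_derivative i (\<lambda>q. matrix_inv (g q)) p (\<chi> k l. D k l)"
    using D unfolding has_partial_derivative_mat_iff has_partial_derivative_def M_def
    by (simp add: has_real_derivative_iff_has_vector_derivative)
  then show "\<exists>d. has_partial_derivative i (\<lambda>q. matrix_inv (g q)) p d" by blast
qed

section \<open>The Levi-Civita connection in a chart\<close>

lemma matrix_vector_mult_minus_right: "(A :: real^'n::finite^'m) *v (- x) = - (A *v x)"
  by (metis diff_0 matrix_vector_mult_diff_distrib matrix_vector_mult_0_right)

lemma inner_symmetric_matrix:
  "transpose M = M \<Longrightarrow> x \<bullet> ((M :: real^'n::finite^'n) *v y) = (M *v x) \<bullet> y"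
  by (metis dot_lmul_matrix inner_commute vector_transpose_matrix)

lemma gm_sym: "transpose (g p) = g p \<Longrightarrow> gm g p a b = gm g p b a"
  unfolding gm_def by (metis inner_symmetric_matrix inner_commute)

lemma gm_add_left: "gm g p (a + b) c = gm g p a c + gm g p b c"
  and gm_add_right: "gm g p c (a + b) = gm g p c a + gm g p c b"
  and gm_diff_left: "gm g p (a - b) c = gm g p a c - gm g p b c"
  and gm_diff_right: "gm g p c (a - b) = gm g p c a - gm g p c b"
  and gm_scaleR_left: "gm g p (s *\<^sub>R a) c = s * gm g p a c"
  and gm_scaleR_right: "gm g p c (s *\<^sub>R a) = s * gm g p c a"
  and gm_minus_left: "gm g p (- a) c = - gm g p a c"
  and gm_minus_right: "gm g p c (- a) = - gm g p c a"
  by (simp_all add: gm_def inner_add_left inner_add_right inner_diff_left inner_diff_right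
      matrix_vector_right_distrib matrix_vector_mult_diff_distrib matrix_vector_mult_scaleR
      matrix_vector_mult_minus_right)

lemmas gm_bilinear = gm_add_left gm_add_right gm_diff_left gm_diff_right gm_scaleR_left gm_scaleR_right
  gm_minus_left gm_minus_right

definition christoffel_first ::
  "(real^'n::finite \<Rightarrow> real^'n^'n) \<Rightarrow> real^'n \<Rightarrow> real^'n \<Rightarrow> real^'n \<Rightarrow> real^'n" where
  "christoffel_first g q v w = (\<chi> l. (1/2) * (\<Sum>i\<in>UNIV. \<Sum>j\<in>UNIV. v $ i * w $ j *
     (pd i (\<lambda>y. g y $ j $ l) q + pd j (\<lambda>y. g y $ i $ l) q - pd l (\<lambda>y. g y $ i $ j) q)))"

lemma christoffel_eq_first: "christoffel g q v w = matrix_inv (g q) *v christoffel_first g q v w"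
  unfolding christoffel_def christoffel_first_def ..

lemma christoffel_first_linear:
  "christoffel_first g q v (a *\<^sub>R x + b *\<^sub>R y) = a *\<^sub>R christoffel_first g q v x + b *\<^sub>R christoffel_first g q v y"
  unfolding christoffel_first_def vec_eq_iff
  by (simp add: sum_distrib_left sum.distrib[symmetric] algebra_simps)

lemma christoffel_linear:
  "christoffel g q v (a *\<^sub>R x + b *\<^sub>R y) = a *\<^sub>R christoffel g q v x + b *\<^sub>R christoffel g q v y"
  by (simp add: christoffel_eq_first christoffel_first_linear matrix_vector_right_distrib
      matrix_vector_mult_scaleR)

lemma christoffel_add: "christoffel g q v (x + y) = christoffel g q v x + christoffel g q v y"
  using christoffel_linear[of g q v 1 x 1 y] by simp

lemma christoffel_scaleR: "christoffel g q v (a *\<^sub>R x) = a *\<^sub>R christoffel g q v x"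
  using christoffel_linear[of g q v a x 0 0] by simp

lemma linear_christoffel: "linear (christoffel g q v)"
  by (rule linearI) (simp_all add: christoffel_add christoffel_scaleR)

lemma sum_rotate3: "(\<Sum>l\<in>L. \<Sum>i\<in>I. \<Sum>j\<in>J. f i j l) = (\<Sum>i\<in>I. \<Sum>j\<in>J. \<Sum>l\<in>L. f i j l)"
  by (subst sum.swap) (rule sum.cong[OF refl sum.swap])

lemma metric_compatibility_sum:
  fixes v A B :: "'n::finite \<Rightarrow> real" and c :: "'n \<Rightarrow> 'n \<Rightarrow> 'n \<Rightarrow> real"
  assumes c_sym: "\<And>i j l. c i j l = c i l j"
  defines "X i j l \<equiv> c i j l + c j i l - c l i j"
  shows "(\<Sum>l\<in>UNIV. ((1/2) * (\<Sum>i\<in>UNIV. \<Sum>j\<in>UNIV. v i * A j * X i j l)) * B l)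
       + (\<Sum>l\<in>UNIV. A l * ((1/2) * (\<Sum>i\<in>UNIV. \<Sum>j\<in>UNIV. v i * B j * X i j l)))
       = (\<Sum>j\<in>UNIV. \<Sum>l\<in>UNIV. \<Sum>i\<in>UNIV. v i * A j * B l * c i j l)"
proof -
  have "(\<Sum>l\<in>UNIV. ((1/2) * (\<Sum>i\<in>UNIV. \<Sum>j\<in>UNIV. v i * A j * X i j l)) * B l)
      = (1/2) * (\<Sum>l\<in>UNIV. \<Sum>i\<in>UNIV. \<Sum>j\<in>UNIV. v i * A j * B l * X i j l)"
    by (simp add: sum_distrib_left sum_distrib_right algebra_simps)
  also have "\<dots> = (1/2) * (\<Sum>i\<in>UNIV. \<Sum>j\<in>UNIV. \<Sum>l\<in>UNIV. v i * A j * B l * X i j l)"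
    by (rule arg_cong[where f = "\<lambda>x. (1/2) * x"], rule sum_rotate3)
  finally have first: "(\<Sum>l\<in>UNIV. ((1/2) * (\<Sum>i\<in>UNIV. \<Sum>j\<in>UNIV. v i * A j * X i j l)) * B l)
      = (1/2) * (\<Sum>i\<in>UNIV. \<Sum>j\<in>UNIV. \<Sum>l\<in>UNIV. v i * A j * B l * X i j l)" .
  have "(\<Sum>l\<in>UNIV. A l * ((1/2) * (\<Sum>i\<in>UNIV. \<Sum>j\<in>UNIV. v i * B j * X i j l)))
      = (1/2) * (\<Sum>l\<in>UNIV. \<Sum>i\<in>UNIV. \<Sum>j\<in>UNIV. v i * A l * B j * X i j l)"
    by (simp add: sum_distrib_left sum_distrib_right algebra_simps)
  also have "\<dots> = (1/2) * (\<Sum>i\<in>UNIV. \<Sum>j\<in>UNIV. \<Sum>l\<in>UNIV. v i * A j * B l * X i l j)"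
    by (rule arg_cong[where f = "\<lambda>x. (1/2) * x"], rule sum.swap)
  finally have second: "(\<Sum>l\<in>UNIV. A l * ((1/2) * (\<Sum>i\<in>UNIV. \<Sum>j\<in>UNIV. v i * B j * X i j l)))
      = (1/2) * (\<Sum>i\<in>UNIV. \<Sum>j\<in>UNIV. \<Sum>l\<in>UNIV. v i * A j * B l * X i l j)" .
  have "(1/2) * (v i * A j * B l * X i j l) + (1/2) * (v i * A j * B l * X i l j) = v i * A j * B l * c i j l"
    for i j l
    unfolding X_def using c_sym[of i j l] c_sym[of j i l] c_sym[of l i j] by (simp add: algebra_simps)
  then have "(1/2) * (\<Sum>i\<in>UNIV. \<Sum>j\<in>UNIV. \<Sum>l\<in>UNIV. v i * A j * B l * X i j l)
      + (1/2) * (\<Sum>i\<in>UNIV. \<Sum>j\<in>UNIV. \<Sum>l\<in>UNIV. v i * A j * B l * X i l j)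
      = (\<Sum>i\<in>UNIV. \<Sum>j\<in>UNIV. \<Sum>l\<in>UNIV. v i * A j * B l * c i j l)"
    by (simp add: sum_distrib_left sum.distrib[symmetric])
  also have "\<dots> = (\<Sum>j\<in>UNIV. \<Sum>l\<in>UNIV. \<Sum>i\<in>UNIV. v i * A j * B l * c i j l)"
    by (rule sum_rotate3)
  finally show ?thesis
    unfolding first second .
qed

lemma curv_antisym: "curv g p A B C = - curv g p B A C"
  by (simp add: curv_def)

locale riemannian_chart =
  fixes U :: "(real^'n::finite) set" and g :: "real^'n \<Rightarrow> real^'n^'n"
  assumes open_U: "open U" and metric: "riemannian_metric_on U g"
begin

lemma smooth_metric: "smooth_tf_on U g"
  using metric unfolding riemannian_metric_on_def by blast

lemma partial_differentiable_metric: "q \<in> U \<Longrightarrow> partial_differentiable g q"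
  by (rule smooth_tf_on_partial_differentiable[OF smooth_metric])

lemma gm_pos: "q \<in> U \<Longrightarrow> X \<noteq> 0 \<Longrightarrow> gm g q X X > 0"
  using metric unfolding riemannian_metric_on_def by blast

lemma metric_symmetric: "q \<in> U \<Longrightarrow> transpose (g q) = g q"
  using metric unfolding riemannian_metric_on_def by blast

lemma gm_commute: "q \<in> U \<Longrightarrow> gm g q a b = gm g q b a"
  by (rule gm_sym[OF metric_symmetric])

lemma pd_metric_symmetric: "q \<in> U \<Longrightarrow> pd i (\<lambda>y. g y $ k $ l) q = pd i (\<lambda>y. g y $ l $ k) q"
proof -
  assume q: "q \<in> U"
  have sym: "g y $ k $ l = g y $ l $ k" if "y \<in> U" for y
    using arg_cong[where f = "\<lambda>M. M $ l $ k", OF metric_symmetric[OF that]] by (simp add: transpose_def)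
  have "smooth_fun_on U (\<lambda>y. g y $ k $ l)"
    using smooth_metric unfolding smooth_tf_on_def by blast
  then have "has_partial_derivative i (\<lambda>y. g y $ k $ l) q (pd i (\<lambda>y. g y $ k $ l) q)"
    using q by (rule smooth_fun_on_has_partial_derivative)
  then have "has_partial_derivative i (\<lambda>y. g y $ l $ k) q (pd i (\<lambda>y. g y $ k $ l) q)"
    using has_partial_derivative_transform_open[OF open_U q, of "\<lambda>y. g y $ k $ l" "\<lambda>y. g y $ l $ k"] sym
    by blast
  then show ?thesis by (metis has_partial_derivative_imp_pd)
qed

lemma metric_invertible: "q \<in> U \<Longrightarrow> invertible (g q)"
proof -
  assume q: "q \<in> U"
  have "x = 0" if "g q *v x = 0" for x
    using that metric q unfolding riemannian_metric_on_def gm_def by force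
  then have "\<exists>B. B ** g q = mat 1" using matrix_left_invertible_ker by blast
  then show ?thesis using invertible_left_inverse by blast
qed

lemma metric_christoffel: "q \<in> U \<Longrightarrow> g q *v christoffel g q v w = christoffel_first g q v w"
  by (simp add: christoffel_eq_first matrix_vector_mul_assoc matrix_inv_right[OF metric_invertible])

lemma christoffel_first_symmetric: "q \<in> U \<Longrightarrow> christoffel_first g q v w = christoffel_first g q w v"
  unfolding christoffel_first_def vec_eq_iff
  by (subst sum.swap) (simp add: pd_metric_symmetric algebra_simps)

lemma christoffel_symmetric: "q \<in> U \<Longrightarrow> christoffel g q v w = christoffel g q w v"
  by (simp add: christoffel_eq_first christoffel_first_symmetric)

lemma partial_differentiable_christoffel: "p \<in> U \<Longrightarrow> partial_differentiable (\<lambda>q. christoffel g q v w) p"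
  unfolding christoffel_eq_first christoffel_first_def
  using smooth_metric unfolding smooth_tf_on_def
  by (intro partial_differentiable_matrix_vector_mult partial_differentiable_vec_lambda
      partial_differentiable_mult partial_differentiable_const partial_differentiable_sum
      partial_differentiable_add partial_differentiable_diff smooth_fun_on_partial_differentiable_pd
      partial_differentiable_matrix_inv[OF partial_differentiable_metric open_U _ metric_invertible])
    auto

lemma dir_deriv_metric:
  assumes q: "q \<in> U"
  shows "A \<bullet> (dir_deriv v g q *v B) = gm g q (christoffel g q v A) B + gm g q A (christoffel g q v B)"
proof -
  have first: "gm g q (christoffel g q v A) B = christoffel_first g q v A \<bullet> B"
    unfolding gm_def using inner_symmetric_matrix[OF metric_symmetric[OF q]] metric_christoffel[OF q] by metis
  have second: "gm g q A (christoffel g q v B) = A \<bullet> christoffel_first g q v B"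
    unfolding gm_def using metric_christoffel[OF q] by metis
  have dg: "dir_deriv v g q = (\<Sum>i\<in>UNIV. v $ i *\<^sub>R (\<chi> k l. pd i (\<lambda>y. g y $ k $ l) q))"
    unfolding dir_deriv_def by (simp add: smooth_tf_on_partial_deriv[OF smooth_metric q])
  show ?thesis
    unfolding first second dg
    using metric_compatibility_sum[of "\<lambda>i j l. pd i (\<lambda>y. g y $ j $ l) q" "\<lambda>i. v $ i" "\<lambda>i. A $ i" "\<lambda>i. B $ i"]
      pd_metric_symmetric[OF q]
    by (simp add: inner_vec_def christoffel_first_def matrix_vector_mult_def sum_component
        sum_distrib_left sum_distrib_right algebra_simps)
qed

lemma curv_christoffel:
  "p \<in> U \<Longrightarrow> curv g p u v w = dir_deriv u (\<lambda>q. christoffel g q v w) p + christoffel g p u (christoffel g p v w)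
     - dir_deriv v (\<lambda>q. christoffel g q u w) p - christoffel g p v (christoffel g p u w)"
  unfolding curv_def nabla_def by (simp add: dd_eq_dir_deriv partial_differentiable_christoffel)

end

lemma curvature_pair_symmetric:
  fixes r :: "'a \<Rightarrow> 'a \<Rightarrow> 'a \<Rightarrow> 'a \<Rightarrow> real"
  assumes antisym12: "\<And>a b c d. r a b c d = - r b a c d"
    and antisym34: "\<And>a b c d. r a b c d = - r a b d c"
    and bianchi: "\<And>a b c d. r a b c d + r b c a d + r c a b d = 0"
  shows "r a b c d = r c d a b"
  using bianchi[of a b c d] bianchi[of b c d a] bianchi[of c d a b] bianchi[of d a b c]
    antisym12[of a b c d] antisym12[of b c d a] antisym12[of c d a b] antisym12[of d a b c]
    antisym34[of a b c d] antisym34[of b c d a] antisym34[of c d a b] antisym34[of d a b c]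
    antisym12[of a c b d] antisym12[of b d c a] antisym34[of c a d b] antisym34[of a c b d]
    antisym12[of c a d b] antisym34[of b d a c] antisym12[of d b a c] antisym34[of d b c a]
  by linarith

context riemannian_chart
begin

lemma curv_bianchi: "p \<in> U \<Longrightarrow> curv g p X Y Z + curv g p Y Z X + curv g p Z X Y = 0"
proof -
  assume p: "p \<in> U"
  have "dir_deriv X (\<lambda>q. christoffel g q Y Z) p = dir_deriv X (\<lambda>q. christoffel g q Z Y) p" for X Y Z
    by (rule dir_deriv_transform_open[OF open_U p _ partial_differentiable_christoffel[OF p]])
      (simp add: christoffel_symmetric)
  then show ?thesis
    unfolding curv_christoffel[OF p] using christoffel_symmetric[OF p] by (simp add: algebra_simps)
qed

lemma curv4_antisym_second:
  assumes p: "p \<in> U"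
  shows "curv4 g p X Y A B = - curv4 g p X Y B A"
proof -
  \<comment> \<open>Differentiate metric compatibility once more: after antisymmetrising in \<open>X\<close>, \<open>Y\<close>
    the second derivatives of \<open>g\<close> cancel by Schwarz's theorem.\<close>
  define G where "G X Y W = dir_deriv X (\<lambda>q. christoffel g q Y W) p" for X Y W
  define C where "C v w = christoffel g p v w" for v w
  have "A \<bullet> (dir_deriv X (\<lambda>q. dir_deriv Y g q) p *v B) = gm g p (G X Y A) B + gm g p (C X (C Y A)) B
     + gm g p (C Y A) (C X B) + gm g p (C X A) (C Y B) + gm g p A (C X (C Y B)) + gm g p A (G X Y B)"
    for X Y
  proof -
    have dg: "partial_differentiable (\<lambda>q. dir_deriv Y g q) p"
      by (rule smooth_tf_on_partial_differentiable_dir_deriv[OF smooth_metric open_U p])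
    have "dir_deriv X (\<lambda>q. A \<bullet> (dir_deriv Y g q *v B)) p
        = dir_deriv X (\<lambda>q. christoffel g q Y A \<bullet> (g q *v B) + A \<bullet> (g q *v christoffel g q Y B)) p"
      using dir_deriv_metric unfolding gm_def
      by (intro dir_deriv_transform_open[OF open_U p]) (simp_all add: dg)
    then have "A \<bullet> (dir_deriv X (\<lambda>q. dir_deriv Y g q) p *v B)
        = G X Y A \<bullet> (g p *v B) + C Y A \<bullet> (dir_deriv X g p *v B)
          + (A \<bullet> (dir_deriv X g p *v C Y B) + A \<bullet> (g p *v G X Y B))"
      by (simp add: dg partial_differentiable_christoffel[OF p] partial_differentiable_metric[OF p]
          G_def C_def algebra_simps)
    then show ?thesis
      using dir_deriv_metric[OF p, of "C Y A" X B] dir_deriv_metric[OF p, of A X "C Y B"]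
      unfolding gm_def C_def by (simp add: algebra_simps)
  qed
  from this[of X Y] this[of Y X] have "gm g p (curv g p X Y A) B + gm g p A (curv g p X Y B) = 0"
    using smooth_tf_on_dir_deriv_commute[OF smooth_metric open_U p, of X Y]
    unfolding curv_christoffel[OF p] G_def[symmetric] C_def[symmetric]
    by (simp add: gm_bilinear)
  then show ?thesis
    unfolding curv4_def using gm_commute[OF p, of A "curv g p X Y B"] by simp
qed

lemma curv4_antisym_first: "curv4 g p A B C D = - curv4 g p B A C D"
  unfolding curv4_def using curv_antisym[of g p A B C] by (simp add: gm_bilinear)

lemma curv4_bianchi: "p \<in> U \<Longrightarrow> curv4 g p A B C D + curv4 g p B C A D + curv4 g p C A B D = 0"
proof -
  assume p: "p \<in> U"
  have "gm g p (curv g p A B C + curv g p B C A + curv g p C A B) D = 0"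
    by (simp add: curv_bianchi[OF p] gm_def)
  then show ?thesis
    unfolding curv4_def by (simp add: gm_bilinear)
qed

lemma curv4_pair_symmetric:
  assumes p: "p \<in> U"
  shows "curv4 g p A B C D = curv4 g p C D A B"
  by (rule curvature_pair_symmetric[where r = "curv4 g p"])
    (rule curv4_antisym_first, rule curv4_antisym_second[OF p], rule curv4_bianchi[OF p])

lemma partial_differentiable_christoffel_matrix:
  "p \<in> U \<Longrightarrow> partial_differentiable (\<lambda>q. matrix (christoffel g q Y)) p"
  unfolding matrix_def
  by (intro partial_differentiable_vec_lambda partial_differentiable_vec_nth partial_differentiable_christoffel)

lemma
  assumes p: "p \<in> U" and V: "partial_differentiable V p"
  shows partial_differentiable_christoffel_comp: "partial_differentiable (\<lambda>q. christoffel g q Y (V q)) p"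
    and dir_deriv_christoffel_comp: "dir_deriv X (\<lambda>q. christoffel g q Y (V q)) p
      = christoffel g p Y (dir_deriv X V p) + dir_deriv X (\<lambda>q. christoffel g q Y (V p)) p"
proof -
  define M where "M q = matrix (christoffel g q Y)" for q
  have christoffel_matrix: "christoffel g q Y w = M q *v w" for q w
    unfolding M_def using matrix_vector_mul(2)[OF linear_christoffel, of g q Y] by metis
  have M: "partial_differentiable M p"
    unfolding M_def[abs_def] by (rule partial_differentiable_christoffel_matrix[OF p])
  show "partial_differentiable (\<lambda>q. christoffel g q Y (V q)) p"
    unfolding christoffel_matrix by (simp add: M V)
  show "dir_deriv X (\<lambda>q. christoffel g q Y (V q)) p
      = christoffel g p Y (dir_deriv X V p) + dir_deriv X (\<lambda>q. christoffel g q Y (V p)) p"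
    unfolding christoffel_matrix by (simp add: M V)
qed

end

section \<open>Kenmotsu structures\<close>

lemmas inner_matrix_vector_distrib = inner_add_left inner_add_right inner_diff_left inner_diff_right
  inner_scaleR_left inner_scaleR_right inner_minus_left inner_minus_right
  matrix_vector_right_distrib matrix_vector_mult_diff_distrib matrix_vector_mult_scaleR
  matrix_vector_mult_minus_right

text \<open>The first and second order data of a Kenmotsu structure at a point \<open>p\<close>:
  \<open>P\<close>, \<open>x\<close>, \<open>e\<close> are \<open>\<phi>\<close>, \<open>\<xi>\<close>, \<open>\<eta>\<close> at \<open>p\<close>, \<open>C\<close> is the Christoffel map at \<open>p\<close>, and
  \<open>DC X\<close>, \<open>DP X\<close>, \<open>Dx X\<close>, \<open>De X\<close>, \<open>Dg X\<close> are the derivatives in direction \<open>X\<close> of the Christoffel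
  map, \<open>\<phi>\<close>, \<open>\<xi>\<close>, \<open>\<eta>\<close>, \<open>g\<close>; \<open>D2P\<close> is the second derivative of \<open>\<phi>\<close>.
  Assumption \<open>kenmotsu_deriv\<close> is the Kenmotsu identity differentiated in direction \<open>X\<close>.\<close>

locale kenmotsu_jet =
  fixes g :: "real^'n::finite \<Rightarrow> real^'n^'n" and p :: "real^'n"
    and P :: "real^'n^'n" and x e :: "real^'n"
    and C :: "real^'n \<Rightarrow> real^'n \<Rightarrow> real^'n"
    and DC :: "real^'n \<Rightarrow> real^'n \<Rightarrow> real^'n \<Rightarrow> real^'n"
    and DP :: "real^'n \<Rightarrow> real^'n^'n" and D2P :: "real^'n \<Rightarrow> real^'n \<Rightarrow> real^'n^'n"
    and Dx De :: "real^'n \<Rightarrow> real^'n" and Dg :: "real^'n \<Rightarrow> real^'n^'n"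
  assumes C_sym: "C v w = C w v"
    and C_add: "C v (a + b) = C v a + C v b"
    and C_scaleR: "C v (c *\<^sub>R a) = c *\<^sub>R C v a"
    and g_sym: "transpose (g p) = g p"
    and P_x: "P *v x = 0"
    and e_x: "e \<bullet> x = 1"
    and e_P: "e \<bullet> (P *v v) = 0"
    and P_P: "P *v (P *v v) = - v + (e \<bullet> v) *\<^sub>R x"
    and e_gm: "e \<bullet> v = gm g p x v"
    and kenmotsu: "DP X *v Z + C X (P *v Z) - P *v C X Z = gm g p (P *v X) Z *\<^sub>R x - (e \<bullet> Z) *\<^sub>R (P *v X)"
    and kenmotsu_deriv: "D2P X Y *v Z + C Y (DP X *v Z) + DC X Y (P *v Z) - (P *v DC X Y Z + DP X *v C Y Z)
      = ((P *v Y) \<bullet> (g p *v Z)) *\<^sub>R Dx X + ((P *v Y) \<bullet> (Dg X *v Z) + (DP X *v Y) \<bullet> (g p *v Z)) *\<^sub>R x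
        - ((e \<bullet> Z) *\<^sub>R (DP X *v Y) + (De X \<bullet> Z) *\<^sub>R (P *v Y))"
    and D2P_sym: "D2P X Y = D2P Y X"
    and Dg_compat: "A \<bullet> (Dg X *v B) = gm g p (C X A) B + gm g p A (C X B)"
    and D_P_x: "P *v Dx X + DP X *v x = 0"
    and D_e_x: "e \<bullet> Dx X + De X \<bullet> x = 0"
    and D_e: "De X = g p *v Dx X + Dg X *v x"
begin

lemma gm_commute: "gm g p a b = gm g p b a"
  by (rule gm_sym[of g p, OF g_sym])

lemma C_minus: "C v (- a) = - C v a"
  using C_scaleR[of v "-1" a] by simp

lemma C_diff: "C v (a - b) = C v a - C v b"
  using C_add[of v a "- b"] C_minus[of v b] by simp

lemma DP_eq: "DP X *v W = gm g p (P *v X) W *\<^sub>R x - (e \<bullet> W) *\<^sub>R (P *v X) - C X (P *v W) + P *v C X W"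
  using kenmotsu[of X W] by (simp add: algebra_simps)

text \<open>In invariant form: \<open>\<nabla>\<^sub>X \<xi> = X - \<eta>(X) \<xi>\<close> and \<open>(\<nabla>\<^sub>X \<eta>) Z = g(X, Z) - \<eta>(X) \<eta>(Z)\<close>.\<close>

lemma nabla_xi: "Dx X = X - (e \<bullet> X) *\<^sub>R x - C X x"
proof -
  have "gm g p (P *v X) x = 0"
    using gm_commute[of "P *v X" x] e_gm[of "P *v X"] e_P[of X] by simp
  then have "DP X *v x = P *v C X x - P *v X"
    using DP_eq[of X x] P_x e_x C_scaleR[of X 0 0] by simp
  then have "P *v Dx X + (P *v C X x - P *v X) = 0"
    using D_P_x[of X] by simp
  then have "P *v (Dx X - X + C X x) = 0"
    by (simp add: inner_matrix_vector_distrib algebra_simps)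
  then have "P *v (P *v (Dx X - X + C X x)) = 0" by simp
  then have dir: "Dx X - X + C X x = (e \<bullet> (Dx X - X + C X x)) *\<^sub>R x"
    unfolding P_P by (simp add: algebra_simps)
  have "De X \<bullet> x = e \<bullet> Dx X + 2 * (e \<bullet> C X x)"
    unfolding D_e using Dg_compat[of x X x] e_gm[of "Dx X"] e_gm[of "C X x"] gm_commute[of "C X x" x]
    by (simp add: inner_matrix_vector_distrib gm_def inner_commute[of "g p *v Dx X" x]
        inner_commute[of "Dg X *v x" x])
  then have "e \<bullet> Dx X = - (e \<bullet> C X x)"
    using D_e_x[of X] by simp
  then have "e \<bullet> (Dx X - X + C X x) = - (e \<bullet> X)"
    by (simp add: inner_matrix_vector_distrib)
  then show ?thesis
    using dir by (simp add: algebra_simps)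
qed

lemma nabla_eta: "De X \<bullet> Z = gm g p X Z - (e \<bullet> X) * (e \<bullet> Z) + gm g p x (C X Z)"
proof -
  have "De X \<bullet> Z = Z \<bullet> (g p *v Dx X) + Z \<bullet> (Dg X *v x)"
    unfolding D_e by (simp add: inner_matrix_vector_distrib inner_commute)
  also have "\<dots> = gm g p Z (Dx X) + gm g p (C X Z) x + gm g p Z (C X x)"
    unfolding Dg_compat by (simp add: gm_def)
  also have "\<dots> = gm g p X Z - (e \<bullet> X) * (e \<bullet> Z) + gm g p x (C X Z)"
    unfolding nabla_xi
    using gm_commute[of Z X] gm_commute[of Z x] gm_commute[of Z "C X x"] gm_commute[of "C X Z" x] e_gm[of Z]
    by (simp add: gm_bilinear)
  finally show ?thesis .
qed

definition curvature :: "real^'n \<Rightarrow> real^'n \<Rightarrow> real^'n \<Rightarrow> real^'n" where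
  "curvature X Y Z = DC X Y Z - DC Y X Z + C X (C Y Z) - C Y (C X Z)"

definition nabla_phi :: "real^'n \<Rightarrow> real^'n \<Rightarrow> real^'n" where
  "nabla_phi X W = gm g p (P *v X) W *\<^sub>R x - (e \<bullet> W) *\<^sub>R (P *v X)"

definition dir_deriv_nabla_phi :: "real^'n \<Rightarrow> real^'n \<Rightarrow> real^'n \<Rightarrow> real^'n" where
  "dir_deriv_nabla_phi X Y Z = ((P *v Y) \<bullet> (g p *v Z)) *\<^sub>R Dx X
     + ((P *v Y) \<bullet> (Dg X *v Z) + (DP X *v Y) \<bullet> (g p *v Z)) *\<^sub>R x
     - ((e \<bullet> Z) *\<^sub>R (DP X *v Y) + (De X \<bullet> Z) *\<^sub>R (P *v Y))"

lemma curvature_phi_commutator: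
  "curvature X Y (P *v Z) - P *v curvature X Y Z
     = dir_deriv_nabla_phi X Y Z - dir_deriv_nabla_phi Y X Z - C Y (nabla_phi X Z) + C X (nabla_phi Y Z)
       + nabla_phi X (C Y Z) - nabla_phi Y (C X Z)"
proof -
  have DC_P: "DC X Y (P *v Z) = dir_deriv_nabla_phi X Y Z - D2P X Y *v Z - C Y (DP X *v Z)
      + P *v DC X Y Z + DP X *v C Y Z" for X Y Z
    using kenmotsu_deriv[of X Y Z, folded dir_deriv_nabla_phi_def] by (simp add: algebra_simps)
  have DP: "DP X *v W = nabla_phi X W - C X (P *v W) + P *v C X W" for X W
    unfolding nabla_phi_def DP_eq by simp
  show ?thesis
    unfolding curvature_def DC_P[of X Y Z] DC_P[of Y X Z] D2P_sym[of Y X] DP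
    by (simp add: C_add C_diff C_minus inner_matrix_vector_distrib algebra_simps)
qed

lemma dir_deriv_nabla_phi_eq:
  "dir_deriv_nabla_phi X Y Z = gm g p (P *v Y) Z *\<^sub>R (X - (e \<bullet> X) *\<^sub>R x - C X x)
      + (gm g p (P *v Y) (C X Z) + gm g p (nabla_phi X Y) Z + gm g p (P *v C X Y) Z) *\<^sub>R x
      - (e \<bullet> Z) *\<^sub>R (nabla_phi X Y - C X (P *v Y) + P *v C X Y)
      - (gm g p X Z - (e \<bullet> X) * (e \<bullet> Z) + gm g p x (C X Z)) *\<^sub>R (P *v Y)"
  unfolding dir_deriv_nabla_phi_def nabla_xi nabla_eta DP_eq Dg_compat nabla_phi_def
  by (simp add: gm_def inner_matrix_vector_distrib algebra_simps)

lemma curvature_phi: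
  "curvature X Y (P *v Z) - P *v curvature X Y Z
     = gm g p Y Z *\<^sub>R (P *v X) - gm g p X Z *\<^sub>R (P *v Y) + gm g p (P *v Y) Z *\<^sub>R X - gm g p (P *v X) Z *\<^sub>R Y"
  unfolding curvature_phi_commutator dir_deriv_nabla_phi_eq nabla_phi_def
  using C_sym[of Y X] e_gm[of Z] e_gm[of "C Y Z"] e_gm[of "C X Z"]
  by (simp add: C_add C_diff C_minus C_scaleR inner_matrix_vector_distrib algebra_simps gm_def)

end

locale kenmotsu_chart =
  fixes U :: "(real^'n::finite) set" and phi :: "real^'n \<Rightarrow> real^'n^'n"
    and eta xi :: "real^'n \<Rightarrow> real^'n" and g :: "real^'n \<Rightarrow> real^'n^'n"
  assumes open_U: "open U" and kenmotsu: "kenmotsu_on U phi eta xi g"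

sublocale kenmotsu_chart \<subseteq> riemannian_chart U g
  using open_U kenmotsu
  by unfold_locales (simp_all add: kenmotsu_on_def almost_contact_metric_on_def)

context kenmotsu_chart
begin

lemma smooth_phi: "smooth_tf_on U phi"
  and smooth_eta: "smooth_vf_on U eta"
  and smooth_xi: "smooth_vf_on U xi"
  using kenmotsu unfolding kenmotsu_on_def almost_contact_metric_on_def by blast+

lemma phi_phi: "q \<in> U \<Longrightarrow> phi q *v (phi q *v X) = - X + (eta q \<bullet> X) *\<^sub>R xi q"
  and eta_xi: "q \<in> U \<Longrightarrow> eta q \<bullet> xi q = 1"
  and eta_phi: "q \<in> U \<Longrightarrow> eta q \<bullet> (phi q *v X) = 0"
  and phi_xi: "q \<in> U \<Longrightarrow> phi q *v xi q = 0"
  and gm_phi_phi: "q \<in> U \<Longrightarrow> gm g q (phi q *v X) (phi q *v Y) = gm g q X Y - (eta q \<bullet> X) * (eta q \<bullet> Y)"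
  and eta_gm: "q \<in> U \<Longrightarrow> eta q \<bullet> X = gm g q (xi q) X"
  using kenmotsu unfolding kenmotsu_on_def almost_contact_metric_on_def by blast+

lemma eta_eq_metric_xi: "q \<in> U \<Longrightarrow> eta q = g q *v xi q"
proof -
  assume q: "q \<in> U"
  have "eta q \<bullet> X = (g q *v xi q) \<bullet> X" for X
    using eta_gm[OF q, of X] inner_symmetric_matrix[OF metric_symmetric[OF q]] unfolding gm_def by metis
  then show ?thesis by (metis vector_eq_rdot)
qed

lemma gm_phi_skew: "q \<in> U \<Longrightarrow> gm g q (phi q *v X) Y = - gm g q X (phi q *v Y)"
proof -
  assume q: "q \<in> U"
  have "gm g q (phi q *v X) (phi q *v (phi q *v Y)) = gm g q X (phi q *v Y)"
    using gm_phi_phi[OF q, of X "phi q *v Y"] eta_phi[OF q] by simp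
  moreover have "gm g q (phi q *v X) (phi q *v (phi q *v Y)) = - gm g q (phi q *v X) Y"
    using phi_phi[OF q, of Y] eta_gm[OF q, of "phi q *v X"] eta_phi[OF q, of X] gm_commute[OF q, of "xi q"]
    by (simp add: gm_bilinear)
  ultimately show ?thesis by simp
qed

lemma kenmotsu_christoffel:
  assumes q: "q \<in> U"
  shows "dir_deriv X phi q *v Z + christoffel g q X (phi q *v Z) - phi q *v christoffel g q X Z
       = gm g q (phi q *v X) Z *\<^sub>R xi q - (eta q \<bullet> Z) *\<^sub>R (phi q *v X)"
proof -
  have "nabla g X (\<lambda>q. phi q *v Z) q - phi q *v nabla g X (\<lambda>_. Z) q
      = gm g q (phi q *v X) Z *\<^sub>R xi q - (eta q \<bullet> Z) *\<^sub>R (phi q *v X)"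
    using kenmotsu q unfolding kenmotsu_on_def by blast
  moreover have "nabla g X (\<lambda>q. phi q *v Z) q = dir_deriv X phi q *v Z + christoffel g q X (phi q *v Z)"
    unfolding nabla_def
    using smooth_tf_on_partial_differentiable[OF smooth_phi q] by (simp add: dd_eq_dir_deriv)
  moreover have "nabla g X (\<lambda>_. Z) q = christoffel g q X Z"
    unfolding nabla_def by (simp add: dd_eq_dir_deriv)
  ultimately show ?thesis by simp
qed

lemma dir_deriv_kenmotsu_christoffel:
  assumes p: "p \<in> U"
  shows "dir_deriv X (\<lambda>q. dir_deriv Y phi q) p *v Z + christoffel g p Y (dir_deriv X phi p *v Z)
      + dir_deriv X (\<lambda>q. christoffel g q Y (phi p *v Z)) p
      - (phi p *v dir_deriv X (\<lambda>q. christoffel g q Y Z) p + dir_deriv X phi p *v christoffel g p Y Z)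
    = ((phi p *v Y) \<bullet> (g p *v Z)) *\<^sub>R dir_deriv X xi p
      + ((phi p *v Y) \<bullet> (dir_deriv X g p *v Z) + (dir_deriv X phi p *v Y) \<bullet> (g p *v Z)) *\<^sub>R xi p
      - ((eta p \<bullet> Z) *\<^sub>R (dir_deriv X phi p *v Y) + (dir_deriv X eta p \<bullet> Z) *\<^sub>R (phi p *v Y))"
proof -
  note d_phi = smooth_tf_on_partial_differentiable[OF smooth_phi p]
  have d_dphi: "partial_differentiable (\<lambda>q. dir_deriv Y phi q) p"
    by (rule smooth_tf_on_partial_differentiable_dir_deriv[OF smooth_phi open_U p])
  have d_phiZ: "partial_differentiable (\<lambda>q. phi q *v Z) p"
    using d_phi by simp
  note d_chr = partial_differentiable_christoffel[OF p]
    partial_differentiable_christoffel_comp[OF p d_phiZ]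
  have "dir_deriv X (\<lambda>q. dir_deriv Y phi q *v Z + christoffel g q Y (phi q *v Z) - phi q *v christoffel g q Y Z) p
      = dir_deriv X (\<lambda>q. ((phi q *v Y) \<bullet> (g q *v Z)) *\<^sub>R xi q - (eta q \<bullet> Z) *\<^sub>R (phi q *v Y)) p"
    using kenmotsu_christoffel unfolding gm_def
    by (intro dir_deriv_transform_open[OF open_U p]) (simp_all add: d_dphi d_chr d_phi)
  then show ?thesis
    using dir_deriv_christoffel_comp[OF p d_phiZ, of X Y]
    by (simp add: d_dphi d_chr d_phi partial_differentiable_metric[OF p]
        smooth_vf_on_partial_differentiable[OF smooth_xi p]
        smooth_vf_on_partial_differentiable[OF smooth_eta p] algebra_simps)
qed

lemma
  assumes p: "p \<in> U"
  shows dir_deriv_phi_xi: "phi p *v dir_deriv X xi p + dir_deriv X phi p *v xi p = 0"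
    and dir_deriv_eta_xi: "eta p \<bullet> dir_deriv X xi p + dir_deriv X eta p \<bullet> xi p = 0"
    and dir_deriv_eta: "dir_deriv X eta p = g p *v dir_deriv X xi p + dir_deriv X g p *v xi p"
proof -
  note d = smooth_tf_on_partial_differentiable[OF smooth_phi p]
    smooth_vf_on_partial_differentiable[OF smooth_xi p]
    smooth_vf_on_partial_differentiable[OF smooth_eta p] partial_differentiable_metric[OF p]
  have "dir_deriv X (\<lambda>q. phi q *v xi q) p = dir_deriv X (\<lambda>q. 0) p"
    by (rule dir_deriv_transform_open[OF open_U p]) (simp_all add: phi_xi d)
  then show "phi p *v dir_deriv X xi p + dir_deriv X phi p *v xi p = 0"
    by (simp add: d)
  have "dir_deriv X (\<lambda>q. eta q \<bullet> xi q) p = dir_deriv X (\<lambda>q. 1) p"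
    by (rule dir_deriv_transform_open[OF open_U p]) (simp_all add: eta_xi d)
  then show "eta p \<bullet> dir_deriv X xi p + dir_deriv X eta p \<bullet> xi p = 0"
    by (simp add: d)
  have "dir_deriv X eta p = dir_deriv X (\<lambda>q. g q *v xi q) p"
    by (rule dir_deriv_transform_open[OF open_U p]) (simp_all add: eta_eq_metric_xi d)
  then show "dir_deriv X eta p = g p *v dir_deriv X xi p + dir_deriv X g p *v xi p"
    by (simp add: d)
qed

lemma kenmotsu_jet_at:
  assumes p: "p \<in> U"
  shows "kenmotsu_jet g p (phi p) (xi p) (eta p) (christoffel g p)
    (\<lambda>X Y W. dir_deriv X (\<lambda>q. christoffel g q Y W) p) (\<lambda>X. dir_deriv X phi p)
    (\<lambda>X Y. dir_deriv X (\<lambda>q. dir_deriv Y phi q) p) (\<lambda>X. dir_deriv X xi p) (\<lambda>X. dir_deriv X eta p)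
    (\<lambda>X. dir_deriv X g p)"
  using p christoffel_symmetric christoffel_add christoffel_scaleR metric_symmetric phi_xi eta_xi eta_phi
    phi_phi eta_gm kenmotsu_christoffel dir_deriv_kenmotsu_christoffel dir_deriv_metric
    dir_deriv_phi_xi dir_deriv_eta_xi dir_deriv_eta
    smooth_tf_on_dir_deriv_commute[OF smooth_phi open_U p]
  by unfold_locales (simp_all add: gm_def)

lemma curv_phi:
  assumes p: "p \<in> U"
  shows "curv g p X Y (phi p *v Z) - phi p *v curv g p X Y Z
    = gm g p Y Z *\<^sub>R (phi p *v X) - gm g p X Z *\<^sub>R (phi p *v Y)
      + gm g p (phi p *v Y) Z *\<^sub>R X - gm g p (phi p *v X) Z *\<^sub>R Y"
  using kenmotsu_jet.curvature_phi[OF kenmotsu_jet_at[OF p], of X Y Z]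
  unfolding curv_christoffel[OF p] kenmotsu_jet.curvature_def[OF kenmotsu_jet_at[OF p]]
  by (simp add: algebra_simps)

lemma curv4_phi_phi:
  assumes p: "p \<in> U" and A: "eta p \<bullet> A = 0" and B: "eta p \<bullet> B = 0"
  shows "curv4 g p A B (phi p *v A) (phi p *v B)
    = curv4 g p A B A B + (gm g p A B)\<^sup>2 - gm g p A A * gm g p B B + (gm g p A (phi p *v B))\<^sup>2"
proof -
  have "curv g p A B (phi p *v A) = phi p *v curv g p A B A
      + (gm g p B A *\<^sub>R (phi p *v A) - gm g p A A *\<^sub>R (phi p *v B)
         + gm g p (phi p *v B) A *\<^sub>R A - gm g p (phi p *v A) A *\<^sub>R B)"
    using curv_phi[OF p, of A B A] by (simp add: algebra_simps)
  then have "curv4 g p A B (phi p *v A) (phi p *v B)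
      = gm g p (phi p *v curv g p A B A) (phi p *v B)
        + gm g p B A * gm g p (phi p *v A) (phi p *v B) - gm g p A A * gm g p (phi p *v B) (phi p *v B)
        + gm g p (phi p *v B) A * gm g p A (phi p *v B) - gm g p (phi p *v A) A * gm g p B (phi p *v B)"
    unfolding curv4_def by (simp add: gm_bilinear)
  moreover have "gm g p (phi p *v A) A = 0"
    using gm_phi_skew[OF p, of A A] gm_commute[OF p, of A "phi p *v A"] by simp
  ultimately show ?thesis
    using gm_phi_phi[OF p, of "curv g p A B A" B] gm_phi_phi[OF p, of A B] gm_phi_phi[OF p, of B B] A B
      gm_commute[OF p, of B A] gm_commute[OF p, of "phi p *v B" A]
    by (simp add: curv4_def power2_eq_square)
qed

end

section \<open>3-Kenmotsu structures\<close>

lemma three_kenmotsu_on_kenmotsu_chart: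
  "open U \<Longrightarrow> three_kenmotsu_on U phi eta xi g \<Longrightarrow> a \<in> {1, 2, 3} \<Longrightarrow> kenmotsu_chart U (phi a) eta xi g"
  unfolding kenmotsu_chart_def three_kenmotsu_on_def by blast

lemma three_kenmotsu_frame:
  assumes U: "open U" and tk: "three_kenmotsu_on U phi eta xi g" and p: "p \<in> U"
  shows "phi 1 p *v (phi 2 p *v x) = phi 3 p *v x"
    and "phi 1 p *v (phi 3 p *v x) = - (phi 2 p *v x)"
    and "phi 2 p *v (phi 1 p *v x) = - (phi 3 p *v x)"
proof -
  interpret k1: kenmotsu_chart U "phi 1" eta xi g
    by (rule three_kenmotsu_on_kenmotsu_chart[OF U tk]) simp
  interpret k2: kenmotsu_chart U "phi 2" eta xi g
    by (rule three_kenmotsu_on_kenmotsu_chart[OF U tk]) simp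
  interpret k3: kenmotsu_chart U "phi 3" eta xi g
    by (rule three_kenmotsu_on_kenmotsu_chart[OF U tk]) simp
  have prod: "phi 3 p = phi 1 p ** phi 2 p" "phi 1 p = phi 2 p ** phi 3 p"
    using tk p unfolding three_kenmotsu_on_def by blast+
  show "phi 1 p *v (phi 2 p *v x) = phi 3 p *v x"
    by (simp add: prod(1) matrix_vector_mul_assoc)
  show "phi 1 p *v (phi 3 p *v x) = - (phi 2 p *v x)"
    using k1.phi_phi[OF p, of "phi 2 p *v x"] k2.eta_phi[OF p, of x]
    unfolding prod(1) matrix_vector_mul_assoc[symmetric] by simp
  show "phi 2 p *v (phi 1 p *v x) = - (phi 3 p *v x)"
    using k2.phi_phi[OF p, of "phi 3 p *v x"] k3.eta_phi[OF p, of x]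
    unfolding prod(2) matrix_vector_mul_assoc[symmetric] by simp
qed

lemma three_kenmotsu_curv4_sum:
  assumes U: "open U" and tk: "three_kenmotsu_on U phi eta xi g"
    and p: "p \<in> U" and x: "eta p \<bullet> x = 0"
  shows "curv4 g p x (phi 1 p *v x) x (phi 1 p *v x) + curv4 g p x (phi 2 p *v x) x (phi 2 p *v x)
    + curv4 g p x (phi 3 p *v x) x (phi 3 p *v x) = 3 * (gm g p x x)\<^sup>2"
proof -
  interpret k1: kenmotsu_chart U "phi 1" eta xi g
    by (rule three_kenmotsu_on_kenmotsu_chart[OF U tk]) simp
  interpret k2: kenmotsu_chart U "phi 2" eta xi g
    by (rule three_kenmotsu_on_kenmotsu_chart[OF U tk]) simp
  interpret k3: kenmotsu_chart U "phi 3" eta xi g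
    by (rule three_kenmotsu_on_kenmotsu_chart[OF U tk]) simp
  define i j k where "i = phi 1 p *v x" and "j = phi 2 p *v x" and "k = phi 3 p *v x"
  note frame = three_kenmotsu_frame[OF U tk p, of x, folded i_def j_def k_def]
  have horizontal: "eta p \<bullet> i = 0" "eta p \<bullet> j = 0" "eta p \<bullet> k = 0"
    unfolding i_def j_def k_def by (rule k1.eta_phi[OF p] k2.eta_phi[OF p] k3.eta_phi[OF p])+
  have orth: "gm g p x i = 0" "gm g p x j = 0" "gm g p x k = 0"
    unfolding i_def j_def k_def
    using k1.gm_phi_skew[OF p, of x x] k2.gm_phi_skew[OF p, of x x] k3.gm_phi_skew[OF p, of x x]
      k1.gm_commute[OF p, of x]
    by simp_all
  have norm: "gm g p i i = gm g p x x" "gm g p j j = gm g p x x" "gm g p k k = gm g p x x"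
    unfolding i_def j_def k_def
    using k1.gm_phi_phi[OF p, of x x] k2.gm_phi_phi[OF p, of x x] k3.gm_phi_phi[OF p, of x x] x by simp_all
  have minus: "curv4 g p a b c (- d) = - curv4 g p a b c d" for a b c d
    unfolding curv4_def by (simp add: gm_bilinear)
  have "curv4 g p x i j k = - curv4 g p x i x i + (gm g p x x)\<^sup>2"
    using k2.curv4_phi_phi[OF p x horizontal(1)] frame(3) minus[of x i j "phi 2 p *v i"] orth norm
    unfolding j_def[symmetric] by (simp add: gm_bilinear power2_eq_square)
  moreover have "curv4 g p i j x k = - curv4 g p x k x k + (gm g p x x)\<^sup>2"
    using k1.curv4_pair_symmetric[OF p, of i j x k] k1.curv4_phi_phi[OF p x horizontal(3)] frame(2)
      minus[of x k i "phi 1 p *v k"] orth norm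
    unfolding i_def[symmetric] by (simp add: gm_bilinear power2_eq_square)
  moreover have "curv4 g p j x i k = - curv4 g p x j x j + (gm g p x x)\<^sup>2"
    using k1.curv4_antisym_first[of p j x i k] k1.curv4_phi_phi[OF p x horizontal(2)] frame(1) orth norm
    unfolding i_def[symmetric] by (simp add: gm_bilinear power2_eq_square)
  ultimately show ?thesis
    using k1.curv4_bianchi[OF p, of x i j k] unfolding i_def j_def k_def by linarith
qed

theorem theorem6:
  fixes U :: "(real^'n::finite) set"
    and phi :: "nat \<Rightarrow> real^'n \<Rightarrow> real^'n^'n"
    and eta xi :: "real^'n \<Rightarrow> real^'n"
    and g :: "real^'n \<Rightarrow> real^'n^'n"
  assumes "odd CARD('n)"
    and "open U"
    and "three_kenmotsu_on U phi eta xi g"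
    and "p \<in> U"
    and "X \<noteq> 0"
    and "eta p \<bullet> X = 0"
  shows "hol_sec_curv phi g 1 p X + hol_sec_curv phi g 2 p X + hol_sec_curv phi g 3 p X = -3"
proof -
  interpret kenmotsu_chart U "phi 1" eta xi g
    by (rule three_kenmotsu_on_kenmotsu_chart[OF assms(2,3)]) simp
  have "gm g p X X > 0"
    by (rule gm_pos[OF assms(4,5)])
  have "hol_sec_curv phi g 1 p X + hol_sec_curv phi g 2 p X + hol_sec_curv phi g 3 p X
      = - (curv4 g p X (phi 1 p *v X) X (phi 1 p *v X) + curv4 g p X (phi 2 p *v X) X (phi 2 p *v X)
          + curv4 g p X (phi 3 p *v X) X (phi 3 p *v X)) / (gm g p X X)\<^sup>2"
    unfolding hol_sec_curv_def by (simp add: add_divide_distrib diff_divide_distrib)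
  also have "\<dots> = -3"
    using three_kenmotsu_curv4_sum[OF assms(2,3,4,6)] \<open>gm g p X X > 0\<close> by simp
  finally show ?thesis .
qed

end
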